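(* For every $\mathtt{PDL}$ sequent $\Gamma\Rightarrow\Delta$: if $\Gamma\Rightarrow\Delta$ is valid, then $\Gamma\Rightarrow\Delta$ is cut-free provable in $\mathtt{CGPDL}$ (i.e. it has a $\mathtt{CGPDL}$ proof containing no instance of the Cut rule).
   Context: $\mathtt{PDL}$ formulas/programs over sets $\mathsf{Prop}$, $\mathsf{AtProg}$: $\varphi ::= \bot \mid p \mid (\varphi\to\varphi) \mid [\pi]\varphi$, $\pi ::= \alpha \mid \pi;\pi \mid \pi\cup\pi \mid \pi^{*} \mid \varphi?$. $[\pi]\Gamma=\{[\pi]\varphi:\varphi\in\Gamma\}$. A model $M=(W,(R_\alpha),V)$: $W\neq\emptyset$, $R_\alpha\subseteq W\times W$, $V:W\to\mathcal P(\mathsf{Prop})$; $R_{\pi_0;\pi_1}$ composition, $R_{\pi_0\cup\pi_1}$ union, $R_{\pi^*}$ reflexive–transitive closure of $R_\pi$, $R_{\psi?}=\{(w,w):M,w\models\psi\}$; $\bot$ false, $p$ true at $w$ iff $p\in V(w)$, $\to$ classical, $[\pi]\varphi$ true at $w$ iff $\varphi$ true at all $v$ with $wR_\pi v$. A sequent $\Gamma\Rightarrow\Delta$ is a pair of finite sets of formulas; valid if in every model at every state where all of $\Gamma$ hold some formula of $\Delta$ holds. $\mathtt{CGPDL}$ rules (premises / conclusion): (Ax) / $\Gamma\Rightarrow\Delta$, $\Gamma\cap\Delta\neq\emptyset$; ($\bot$) / $\Gamma,\bot\Rightarrow\Delta$; ($\to$L) $\Gamma\Rightarrow\varphi,\Delta$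 and $\Gamma,\psi\Rightarrow\Delta$ / $\Gamma,\varphi\to\psi\Rightarrow\Delta$; ($\to$R) $\Gamma,\varphi\Rightarrow\psi,\Delta$ / $\Gamma\Rightarrow\varphi\to\psi,\Delta$; (Wk) $\Gamma\Rightarrow\Delta$ / $\Gamma'\Rightarrow\Delta'$, $\Gamma\subseteq\Gamma'$, $\Delta\subseteq\Delta'$; (Cut) $\Gamma\Rightarrow\varphi,\Delta$ and $\Gamma,\varphi\Rightarrow\Delta$ / $\Gamma\Rightarrow\Delta$; (K) $\Gamma\Rightarrow\varphi$ / $\Gamma',[\pi]\Gamma\Rightarrow[\pi]\varphi,\Delta$; ($[;]$L) $\Gamma,[\pi_0][\pi_1]\varphi\Rightarrow\Delta$ / $\Gamma,[\pi_0;\pi_1]\varphi\Rightarrow\Delta$; ($[;]$R) $\Gamma\Rightarrow[\pi_0][\pi_1]\varphi,\Delta$ / $\Gamma\Rightarrow[\pi_0;\pi_1]\varphi,\Delta$; ($[\cup]$L) $\Gamma,[\pi_0]\varphi,[\pi_1]\varphi\Rightarrow\Delta$ / $\Gamma,[\pi_0\cup\pi_1]\varphi\Rightarrow\Delta$; ($[\cup]$R) $\Gamma\Rightarrow\Delta,[\pi_0]\varphi$ and $\Gamma\Rightarrow\Delta,[\pi_1]\varphi$ / $\Gamma\Rightarrow[\pi_0\cup\pi_1]\varphi,\Delta$; ($[*]$L) $\Gamma,\varphi,[\pi][\pi^*]\varphi\Rightarrow\Delta$ / $\Gamma,[\pi^*]\varphi\Rightarrow\Delta$; ($[?]$L) $\Gamma\Rightarrow\varphi,\Delta$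 and $\Gamma,\psi\Rightarrow\Delta$ / $\Gamma,[\varphi?]\psi\Rightarrow\Delta$; ($[?]$R) $\Gamma,\varphi\Rightarrow\psi,\Delta$ / $\Gamma\Rightarrow[\varphi?]\psi,\Delta$; (C-s) $\Gamma\Rightarrow\varphi,\Delta$ and $\Gamma\Rightarrow[\pi][\pi^*]\varphi,\Delta$ / $\Gamma\Rightarrow[\pi^*]\varphi,\Delta$. A pre-proof is a finite tree of sequents built of rule instances whose leaves are Ax/$\bot$ instances or buds, with each bud assigned a companion (an inner node labelled with the same sequent); the derivation graph identifies each bud with its companion; a path is a sequence of nodes each a premise of the previous one's rule instance. A trace along a path $(\Gamma_i\Rightarrow\Delta_i)$ is a sequence $\tau_i\in\Delta_i$ such that: at ($\to$R), ($[;]$R), ($[\cup]$R), ($[?]$R), (C-s), either $\tau_{i+1}=\tau_i$ or $\tau_i$ is the principal formula and $\tau_{i+1}$ is its component in the chosen premise ($\psi$ for $\varphi\to\psi$; $[\pi_0][\pi_1]\varphi$ for $[\pi_0;\pi_1]\varphi$; $[\pi_j]\varphi$ for $[\pi_0\cup\pi_1]\varphi$ in the premise containing $[\pi_j]\varphi$; $\psi$ for $[\varphi?]\psi$; $\varphi$ or $[\pi][\pi^*]\varphi$ for $[\pi^*]\varphi$, the latter being a progress point); at (K), $\tau_i$ is the principal formula $[\pi]\varphi$ and $\tau_{i+1}=\varphi$; at all other rules, $\tau_{i+1}=\tau_i$. A $\mathtt{CGPDL}$ proof is a pre-proof in which every infinite path of the derivation graph has a tail followed by a trace with infinitely many progress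 points. *)

theory Defs
  imports Main
begin

datatype ('p, 'a) fm =
    Bot
  | Atom 'p
  | Imp "('p, 'a) fm" "('p, 'a) fm"
  | Box "('p, 'a) prog" "('p, 'a) fm"
and ('p, 'a) prog =
    At 'a
  | Seq "('p, 'a) prog" "('p, 'a) prog"
  | Choice "('p, 'a) prog" "('p, 'a) prog"
  | Star "('p, 'a) prog"
  | Test "('p, 'a) fm"

primrec sat :: "'w set \<Rightarrow> ('a \<Rightarrow> ('w \<times> 'w) set) \<Rightarrow> ('w \<Rightarrow> 'p set) \<Rightarrow> 'w \<Rightarrow> ('p, 'a) fm \<Rightarrow> bool"
  and rel :: "'w set \<Rightarrow> ('a \<Rightarrow> ('w \<times> 'w) set) \<Rightarrow> ('w \<Rightarrow> 'p set) \<Rightarrow> ('p, 'a) prog \<Rightarrow> ('w \<times> 'w) set"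
where
  "sat W R V w Bot = False"
| "sat W R V w (Atom p) = (p \<in> V w)"
| "sat W R V w (Imp f g) = (sat W R V w f \<longrightarrow> sat W R V w g)"
| "sat W R V w (Box pr f) = (\<forall>v. (w, v) \<in> rel W R V pr \<longrightarrow> sat W R V v f)"
| "rel W R V (At a) = R a"
| "rel W R V (Seq p q) = rel W R V p O rel W R V q"
| "rel W R V (Choice p q) = rel W R V p \<union> rel W R V q"
| "rel W R V (Star p) = Id_on W \<union> (rel W R V p)\<^sup>+"
| "rel W R V (Test f) = {(w, w) | w. w \<in> W \<and> sat W R V w f}"

definition is_model :: "'w set \<Rightarrow> ('a \<Rightarrow> ('w \<times> 'w) set) \<Rightarrow> ('w \<Rightarrow> 'p set) \<Rightarrow> bool" where
  "is_model W R V \<longleftrightarrow> W \<noteq> {} \<and> (\<forall>a. R a \<subseteq> W \<times> W)"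

definition valid_in :: "'w itself \<Rightarrow> ('p, 'a) fm set \<Rightarrow> ('p, 'a) fm set \<Rightarrow> bool" where
  "valid_in _ G D \<longleftrightarrow>
     (\<forall>(W :: 'w set) R V. is_model W R V \<longrightarrow>
        (\<forall>w\<in>W. (\<forall>f\<in>G. sat W R V w f) \<longrightarrow> (\<exists>g\<in>D. sat W R V w g)))"

text \<open>Validity: states taken from nat (PDL has the finite model property, so this is validity in all models).\<close>
definition valid :: "('p, 'a) fm set \<Rightarrow> ('p, 'a) fm set \<Rightarrow> bool" where
  "valid G D \<longleftrightarrow> valid_in TYPE(nat) G D"

type_synonym ('p, 'a) sequent = "('p, 'a) fm set \<times> ('p, 'a) fm set"

text \<open>Rule names, carrying the data determining the principal formula.\<close>
datatype ('p, 'a) rule =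
    RAx
  | RBot
  | RImpL "('p, 'a) fm" "('p, 'a) fm"
  | RImpR "('p, 'a) fm" "('p, 'a) fm"
  | RWk
  | RCut "('p, 'a) fm"
  | RK "('p, 'a) prog" "('p, 'a) fm"
  | RSeqL "('p, 'a) prog" "('p, 'a) prog" "('p, 'a) fm"
  | RSeqR "('p, 'a) prog" "('p, 'a) prog" "('p, 'a) fm"
  | RChoiceL "('p, 'a) prog" "('p, 'a) prog" "('p, 'a) fm"
  | RChoiceR "('p, 'a) prog" "('p, 'a) prog" "('p, 'a) fm"
  | RStarL "('p, 'a) prog" "('p, 'a) fm"
  | RTestL "('p, 'a) fm" "('p, 'a) fm"
  | RTestR "('p, 'a) fm" "('p, 'a) fm"
  | RCS "('p, 'a) prog" "('p, 'a) fm"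

inductive rinst :: "('p, 'a) rule \<Rightarrow> ('p, 'a) sequent list \<Rightarrow> ('p, 'a) sequent \<Rightarrow> bool" where
  ax: "G \<inter> D \<noteq> {} \<Longrightarrow> rinst RAx [] (G, D)"
| bot: "rinst RBot [] (insert Bot G, D)"
| impL: "rinst (RImpL f g) [(G, insert f D), (insert g G, D)] (insert (Imp f g) G, D)"
| impR: "rinst (RImpR f g) [(insert f G, insert g D)] (G, insert (Imp f g) D)"
| wk: "G \<subseteq> G' \<Longrightarrow> D \<subseteq> D' \<Longrightarrow> rinst RWk [(G, D)] (G', D')"
| cut: "rinst (RCut f) [(G, insert f D), (insert f G, D)] (G, D)"
| k: "rinst (RK p f) [(G, {f})] (G' \<union> Box p ` G, insert (Box p f) D)"
| seqL: "rinst (RSeqL p q f) [(insert (Box p (Box q f)) G, D)] (insert (Box (Seq p q) f) G, D)"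
| seqR: "rinst (RSeqR p q f) [(G, insert (Box p (Box q f)) D)] (G, insert (Box (Seq p q) f) D)"
| choiceL: "rinst (RChoiceL p q f) [(insert (Box p f) (insert (Box q f) G), D)]
                                   (insert (Box (Choice p q) f) G, D)"
| choiceR: "rinst (RChoiceR p q f) [(G, insert (Box p f) D), (G, insert (Box q f) D)]
                                   (G, insert (Box (Choice p q) f) D)"
| starL: "rinst (RStarL p f) [(insert f (insert (Box p (Box (Star p) f)) G), D)]
                            (insert (Box (Star p) f) G, D)"
| testL: "rinst (RTestL f g) [(G, insert f D), (insert g G, D)] (insert (Box (Test f) g) G, D)"
| testR: "rinst (RTestR f g) [(insert f G, insert g D)] (G, insert (Box (Test f) g) D)"
| cs: "rinst (RCS p f) [(G, insert f D), (G, insert (Box p (Box (Star p) f)) D)]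
                      (G, insert (Box (Star p) f) D)"

text \<open>Trace step: tstep r i t t' -- the trace moves from t (in the conclusion of an instance
  of r) to t' (in its i-th premise, counting from 0).\<close>
fun tstep :: "('p, 'a) rule \<Rightarrow> nat \<Rightarrow> ('p, 'a) fm \<Rightarrow> ('p, 'a) fm \<Rightarrow> bool" where
  "tstep (RImpR f g) i t t' = (t' = t \<or> (t = Imp f g \<and> t' = g))"
| "tstep (RSeqR p q f) i t t' = (t' = t \<or> (t = Box (Seq p q) f \<and> t' = Box p (Box q f)))"
| "tstep (RChoiceR p q f) i t t' =
     (t' = t \<or> (t = Box (Choice p q) f \<and> t' = Box (if i = 0 then p else q) f))"
| "tstep (RTestR f g) i t t' = (t' = t \<or> (t = Box (Test f) g \<and> t' = g))"
| "tstep (RCS p f) i t t' =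
     (t' = t \<or> (t = Box (Star p) f \<and> t' = (if i = 0 then f else Box p (Box (Star p) f))))"
| "tstep (RK p f) i t t' = (t = Box p f \<and> t' = f)"
| "tstep RAx i t t' = (t' = t)"
| "tstep RBot i t t' = (t' = t)"
| "tstep (RImpL f g) i t t' = (t' = t)"
| "tstep RWk i t t' = (t' = t)"
| "tstep (RCut f) i t t' = (t' = t)"
| "tstep (RSeqL p q f) i t t' = (t' = t)"
| "tstep (RChoiceL p q f) i t t' = (t' = t)"
| "tstep (RStarL p f) i t t' = (t' = t)"
| "tstep (RTestL f g) i t t' = (t' = t)"

definition progress :: "('p, 'a) rule \<Rightarrow> nat \<Rightarrow> ('p, 'a) fm \<Rightarrow> ('p, 'a) fm \<Rightarrow> bool" where
  "progress r i t t' \<longleftrightarrow>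
     (\<exists>p f. r = RCS p f \<and> i = 1 \<and> t = Box (Star p) f \<and> t' = Box p (Box (Star p) f))"

text \<open>A node is either an inner node / axiom leaf carrying a rule instance and its list of
  children (premises), or a bud pointing to its companion.\<close>
datatype ('p, 'a) node_kind = Inner "('p, 'a) rule" "nat list" | Bud nat

record ('p, 'a) preproof =
  nodes :: "nat set"
  root :: nat
  lab :: "nat \<Rightarrow> ('p, 'a) sequent"
  kind :: "nat \<Rightarrow> ('p, 'a) node_kind"

definition child_edges :: "('p, 'a) preproof \<Rightarrow> (nat \<times> nat) set" where
  "child_edges P = {(n, c). n \<in> nodes P \<and> (\<exists>r cs. kind P n = Inner r cs \<and> c \<in> set cs)}"

definition is_preproof :: "('p, 'a) preproof \<Rightarrow> bool" where
  "is_preproof P \<longleftrightarrow>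
     finite (nodes P) \<and> root P \<in> nodes P
   \<comment> \<open>sequents are pairs of finite sets\<close>
   \<and> (\<forall>n\<in>nodes P. finite (fst (lab P n)) \<and> finite (snd (lab P n)))
   \<comment> \<open>tree structure\<close>
   \<and> (\<forall>n\<in>nodes P. \<forall>r cs. kind P n = Inner r cs \<longrightarrow> set cs \<subseteq> nodes P)
   \<and> (\<forall>n\<in>nodes P. (root P, n) \<in> (child_edges P)\<^sup>*)
   \<and> (\<forall>n\<in>nodes P. \<forall>r cs i. kind P n = Inner r cs \<longrightarrow> i < length cs \<longrightarrow> cs ! i \<noteq> root P)
   \<and> (\<forall>n\<in>nodes P. \<forall>m\<in>nodes P. \<forall>r cs r' cs' i j.
        kind P n = Inner r cs \<longrightarrow> kind P m = Inner r' cs' \<longrightarrow> i < length cs \<longrightarrow> j < length cs'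
        \<longrightarrow> cs ! i = cs' ! j \<longrightarrow> n = m \<and> i = j)
   \<comment> \<open>rule instances (leaves with a rule are exactly Ax / Bot instances)\<close>
   \<and> (\<forall>n\<in>nodes P. \<forall>r cs. kind P n = Inner r cs \<longrightarrow> rinst r (map (lab P) cs) (lab P n))
   \<comment> \<open>buds: companion is an inner node with the same sequent\<close>
   \<and> (\<forall>n\<in>nodes P. \<forall>c. kind P n = Bud c \<longrightarrow>
        c \<in> nodes P \<and> lab P c = lab P n \<and> (\<exists>r cs. kind P c = Inner r cs \<and> cs \<noteq> []))"

text \<open>In the derivation graph a bud is identified with its companion.\<close>
definition resolve :: "('p, 'a) preproof \<Rightarrow> nat \<Rightarrow> nat" where
  "resolve P c = (case kind P c of Bud d \<Rightarrow> d | Inner _ _ \<Rightarrow> c)"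

definition rule_of :: "('p, 'a) preproof \<Rightarrow> nat \<Rightarrow> ('p, 'a) rule" where
  "rule_of P n = (case kind P n of Inner r _ \<Rightarrow> r | Bud _ \<Rightarrow> RAx)"

definition inf_path :: "('p, 'a) preproof \<Rightarrow> (nat \<Rightarrow> nat) \<Rightarrow> (nat \<Rightarrow> nat) \<Rightarrow> bool" where
  "inf_path P f g \<longleftrightarrow>
     (\<forall>j. f j \<in> nodes P \<and>
          (\<exists>r cs. kind P (f j) = Inner r cs \<and> g j < length cs \<and> f (Suc j) = resolve P (cs ! g j)))"

definition good_trace :: "('p, 'a) preproof \<Rightarrow> (nat \<Rightarrow> nat) \<Rightarrow> (nat \<Rightarrow> nat) \<Rightarrow> nat \<Rightarrow> (nat \<Rightarrow> ('p, 'a) fm) \<Rightarrow> bool" where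
  "good_trace P f g k t \<longleftrightarrow>
     (\<forall>j\<ge>k. t j \<in> snd (lab P (f j)) \<and> tstep (rule_of P (f j)) (g j) (t j) (t (Suc j)))
   \<and> (\<forall>m. \<exists>j\<ge>max k m. progress (rule_of P (f j)) (g j) (t j) (t (Suc j)))"

definition is_proof :: "('p, 'a) preproof \<Rightarrow> bool" where
  "is_proof P \<longleftrightarrow> is_preproof P \<and>
     (\<forall>f g. inf_path P f g \<longrightarrow> (\<exists>k t. good_trace P f g k t))"

definition cut_free :: "('p, 'a) preproof \<Rightarrow> bool" where
  "cut_free P \<longleftrightarrow> (\<forall>n\<in>nodes P. \<forall>f cs. kind P n \<noteq> Inner (RCut f) cs)"

definition cutfree_provable :: "('p, 'a) fm set \<Rightarrow> ('p, 'a) fm set \<Rightarrow> bool" where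
  "cutfree_provable G D \<longleftrightarrow>
     (\<exists>P :: ('p, 'a) preproof. is_proof P \<and> cut_free P \<and> lab P (root P) = (G, D))"

end

(*
  Completeness is shown by a proof search on configurations: a sequent over the Fischer-Ladner
  closure of the end-sequent, a focus (a succedent formula whose trace is followed) and a loop
  focus (a succedent formula that the saturated sequent unfolds forever without reaching an
  atomic or modal formula). Search saturates the sequent, decomposes the focus, unfolds such
  trapped formulas, and finally applies (K) to the boxes of atomic programs; a branch is closed
  as a bud when its configuration reappears on the history of the focus or of the loop focus.

  If search fails, the saturated configurations from which it fails form a countermodel: every
  succedent formula is refuted by a finite chain of rule and (K) steps, since each (K) step that
  follows the focus lengthens the focus history. If search succeeds, the tree with back edges is a
  cut-free pre-proof. On an infinite path either the focus changes infinitely often, or from some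
  point on every back edge comes from the loop history and the loop focus changes infinitely
  often; a trace that changes infinitely often passes infinitely many progress points, because
  every other trace step lowers a weight.
*)
theory Submission
  imports Defs "HOL-Library.Countable" "HOL-Library.Product_Order"
begin

section \<open>Formula measures and the Fischer--Ladner closure\<close>

text \<open>Unlike size, this weight drops at every trace step except a progress point.\<close>

primrec trace_weight :: "('p,'a) fm \<Rightarrow> nat" and prog_weight :: "('p,'a) prog \<Rightarrow> nat" where
  "trace_weight Bot = 1"
| "trace_weight (Atom p) = 1"
| "trace_weight (Imp f g) = trace_weight f + trace_weight g + 1"
| "trace_weight (Box p f) = prog_weight p + trace_weight f"
| "prog_weight (At a) = 1"
| "prog_weight (Seq p q) = prog_weight p + prog_weight q + 1"
| "prog_weight (Choice p q) = prog_weight p + prog_weight q + 1"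
| "prog_weight (Star p) = prog_weight p + 1"
| "prog_weight (Test f) = 1"

lemma prog_weight_pos [simp]: "0 < prog_weight p"
  by (cases p) auto

lemma tstep_trace_weight_less:
  assumes "tstep r i t t'" "t' \<noteq> t" "\<not> progress r i t t'" "i < 2"
  shows "trace_weight t' < trace_weight t"
  using assms by (cases r) (auto simp: progress_def split: if_splits)

fun components :: "('p,'a) fm \<Rightarrow> ('p,'a) fm set" where
  "components (Imp f g) = {f, g}"
| "components (Box (At a) f) = {f}"
| "components (Box (Seq p q) f) = {Box p (Box q f)}"
| "components (Box (Choice p q) f) = {Box p f, Box q f}"
| "components (Box (Star p) f) = {f, Box p (Box (Star p) f)}"
| "components (Box (Test g) f) = {g, f}"
| "components _ = {}"

fun side_formulas :: "('p,'a) fm \<Rightarrow> ('p,'a) fm set" where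
  "side_formulas (Imp f g) = {f}"
| "side_formulas (Box (Test g) f) = {g}"
| "side_formulas _ = {}"

fun fl_closure :: "('p,'a) fm \<Rightarrow> ('p,'a) fm set"
  and fl_box_closure :: "('p,'a) prog \<Rightarrow> ('p,'a) fm \<Rightarrow> ('p,'a) fm set" where
  "fl_closure Bot = {Bot}"
| "fl_closure (Atom p) = {Atom p}"
| "fl_closure (Imp f g) = insert (Imp f g) (fl_closure f \<union> fl_closure g)"
| "fl_closure (Box p f) = fl_box_closure p f \<union> fl_closure f"
| "fl_box_closure (At a) f = {Box (At a) f}"
| "fl_box_closure (Seq p q) f =
     insert (Box (Seq p q) f) (fl_box_closure p (Box q f) \<union> fl_box_closure q f)"
| "fl_box_closure (Choice p q) f =
     insert (Box (Choice p q) f) (fl_box_closure p f \<union> fl_box_closure q f)"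
| "fl_box_closure (Star p) f = insert (Box (Star p) f) (fl_box_closure p (Box (Star p) f))"
| "fl_box_closure (Test g) f = insert (Box (Test g) f) (fl_closure g)"

lemma
  fixes \<phi> :: "('p,'a) fm" and \<pi> :: "('p,'a) prog"
  shows finite_fl_closure: "finite (fl_closure \<phi>)"
    and finite_fl_box_closure: "\<forall>f. finite (fl_box_closure \<pi> f)"
  by (induct \<phi> and \<pi> rule: fm.induct prog.induct) auto

lemma fl_box_closure_self: "Box \<pi> f \<in> fl_box_closure \<pi> f"
  by (cases \<pi>) auto

lemma fl_closure_self: "\<phi> \<in> fl_closure \<phi>"
  by (cases \<phi>) (auto simp: fl_box_closure_self)

lemma
  fixes \<phi> :: "('p,'a) fm" and \<pi> :: "('p,'a) prog"
  shows fl_closure_closed: "\<forall>\<psi>\<in>fl_closure \<phi>. components \<psi> \<subseteq> fl_closure \<phi>"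
    and fl_box_closure_closed:
      "\<forall>f. \<forall>\<psi>\<in>fl_box_closure \<pi> f. components \<psi> \<subseteq> fl_box_closure \<pi> f \<union> fl_closure f"
proof (induct \<phi> and \<pi> rule: fm.induct prog.induct)
  case (Box p f) then show ?case by auto
next
  case (Seq p q) then show ?case using fl_box_closure_self fl_closure_self by fastforce
next
  case (Choice p q) then show ?case using fl_box_closure_self fl_closure_self by fastforce
next
  case (Star p) then show ?case using fl_box_closure_self fl_closure_self by fastforce
next
  case (Test g) then show ?case using fl_box_closure_self fl_closure_self by fastforce
qed (auto simp: fl_closure_self)

lemma components_fl_closure: "\<psi> \<in> fl_closure \<phi> \<Longrightarrow> x \<in> components \<psi> \<Longrightarrow> x \<in> fl_closure \<phi>"
  using fl_closure_closed by blast

lemma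
  fixes \<phi> :: "('p,'a) fm" and \<pi> :: "('p,'a) prog"
  shows side_formulas_fl_closure_less:
      "\<forall>\<psi>\<in>fl_closure \<phi>. \<forall>s\<in>side_formulas \<psi>. size s < size \<phi>"
    and side_formulas_fl_box_closure_less:
      "\<forall>f. \<forall>\<psi>\<in>fl_box_closure \<pi> f. \<forall>s\<in>side_formulas \<psi>. size s < size \<pi>"
  by (induct \<phi> and \<pi> rule: fm.induct prog.induct) fastforce+

section \<open>Decomposition rules\<close>

fun decomposable :: "('p,'a) fm \<Rightarrow> bool" where
  "decomposable (Imp f g) = True"
| "decomposable (Box (At a) f) = False"
| "decomposable (Box p f) = True"
| "decomposable _ = False"

fun left_premises :: "('p,'a) fm \<Rightarrow> ('p,'a) sequent \<Rightarrow> ('p,'a) sequent list" where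
  "left_premises (Imp f g) (G, D) = [(G, insert f D), (insert g G, D)]"
| "left_premises (Box (Seq p q) f) (G, D) = [(insert (Box p (Box q f)) G, D)]"
| "left_premises (Box (Choice p q) f) (G, D) = [(insert (Box p f) (insert (Box q f) G), D)]"
| "left_premises (Box (Star p) f) (G, D) = [(insert f (insert (Box p (Box (Star p) f)) G), D)]"
| "left_premises (Box (Test g) f) (G, D) = [(G, insert g D), (insert f G, D)]"
| "left_premises _ s = []"

fun left_rule :: "('p,'a) fm \<Rightarrow> ('p,'a) rule" where
  "left_rule (Imp f g) = RImpL f g"
| "left_rule (Box (Seq p q) f) = RSeqL p q f"
| "left_rule (Box (Choice p q) f) = RChoiceL p q f"
| "left_rule (Box (Star p) f) = RStarL p f"
| "left_rule (Box (Test g) f) = RTestL g f"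
| "left_rule _ = RAx"

fun right_premises :: "('p,'a) fm \<Rightarrow> ('p,'a) sequent \<Rightarrow> ('p,'a) sequent list" where
  "right_premises (Imp f g) (G, D) = [(insert f G, insert g D)]"
| "right_premises (Box (Seq p q) f) (G, D) = [(G, insert (Box p (Box q f)) D)]"
| "right_premises (Box (Choice p q) f) (G, D) = [(G, insert (Box p f) D), (G, insert (Box q f) D)]"
| "right_premises (Box (Star p) f) (G, D) = [(G, insert f D), (G, insert (Box p (Box (Star p) f)) D)]"
| "right_premises (Box (Test g) f) (G, D) = [(insert g G, insert f D)]"
| "right_premises _ s = []"

fun right_rule :: "('p,'a) fm \<Rightarrow> ('p,'a) rule" where
  "right_rule (Imp f g) = RImpR f g"
| "right_rule (Box (Seq p q) f) = RSeqR p q f"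
| "right_rule (Box (Choice p q) f) = RChoiceR p q f"
| "right_rule (Box (Star p) f) = RCS p f"
| "right_rule (Box (Test g) f) = RTestR g f"
| "right_rule _ = RAx"

fun right_component :: "('p,'a) fm \<Rightarrow> nat \<Rightarrow> ('p,'a) fm" where
  "right_component (Imp f g) i = g"
| "right_component (Box (Seq p q) f) i = Box p (Box q f)"
| "right_component (Box (Choice p q) f) i = (if i = 0 then Box p f else Box q f)"
| "right_component (Box (Star p) f) i = (if i = 0 then f else Box p (Box (Star p) f))"
| "right_component (Box (Test g) f) i = f"
| "right_component f i = f"

lemma rinst_left_rule:
  assumes "\<phi> \<in> fst s" "decomposable \<phi>"
  shows "rinst (left_rule \<phi>) (left_premises \<phi> s) s"
proof -
  obtain G D where s: "s = (G, D)" by (cases s)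
  have "insert \<phi> G = G" using assms s by auto
  then show ?thesis using assms(2) unfolding s
    by (cases \<phi> rule: decomposable.cases)
      (simp_all, (metis rinst.impL rinst.seqL rinst.choiceL rinst.starL rinst.testL)+)
qed

lemma rinst_right_rule:
  assumes "\<phi> \<in> snd s" "decomposable \<phi>"
  shows "rinst (right_rule \<phi>) (right_premises \<phi> s) s"
proof -
  obtain G D where s: "s = (G, D)" by (cases s)
  have "insert \<phi> D = D" using assms s by auto
  then show ?thesis using assms(2) unfolding s
    by (cases \<phi> rule: decomposable.cases)
      (simp_all, (metis rinst.impR rinst.seqR rinst.choiceR rinst.cs rinst.testR)+)
qed

lemma length_left_premises:
  "decomposable \<phi> \<Longrightarrow> 0 < length (left_premises \<phi> s) \<and> length (left_premises \<phi> s) \<le> 2"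
  by (cases s; cases \<phi> rule: decomposable.cases) auto

lemma length_right_premises:
  "decomposable \<phi> \<Longrightarrow> 0 < length (right_premises \<phi> s) \<and> length (right_premises \<phi> s) \<le> 2"
  by (cases s; cases \<phi> rule: decomposable.cases) auto

lemma length_right_premises_indep: "length (right_premises \<phi> s) = length (right_premises \<phi> t)"
  by (cases s; cases t; cases \<phi> rule: decomposable.cases) auto

lemma left_rule_neq: "left_rule \<phi> \<noteq> RK p f" "left_rule \<phi> \<noteq> RCut f"
  by (cases \<phi> rule: decomposable.cases; simp)+

lemma right_rule_neq: "right_rule \<phi> \<noteq> RK p f" "right_rule \<phi> \<noteq> RCut f"
  by (cases \<phi> rule: decomposable.cases; simp)+

lemma tstep_refl: "(\<And>p f. r \<noteq> RK p f) \<Longrightarrow> tstep r i t t"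
  by (cases r) auto

lemma tstep_right_component:
  "decomposable \<phi> \<Longrightarrow> i < length (right_premises \<phi> s) \<Longrightarrow> tstep (right_rule \<phi>) i \<phi> (right_component \<phi> i)"
  by (cases s; cases \<phi> rule: decomposable.cases) (auto simp: less_Suc_eq)

lemma right_component_in_premise:
  "i < length (right_premises \<phi> s) \<Longrightarrow> right_component \<phi> i \<in> snd (right_premises \<phi> s ! i)"
  by (cases s; cases \<phi> rule: decomposable.cases) (auto simp: less_Suc_eq nth_Cons')

lemma right_component_components:
  "decomposable \<phi> \<Longrightarrow> i < length (right_premises \<phi> s) \<Longrightarrow> right_component \<phi> i \<in> components \<phi>"
  by (cases s; cases \<phi> rule: decomposable.cases) auto

lemma components_neq: "x \<in> components \<phi> \<Longrightarrow> x \<noteq> \<phi>"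
  by (cases \<phi> rule: decomposable.cases) (auto dest: arg_cong[of _ _ size])

lemma left_premises_ge: "s' \<in> set (left_premises \<phi> s) \<Longrightarrow> s \<le> s'"
  by (cases s; cases \<phi> rule: decomposable.cases) auto

lemma right_premises_ge: "s' \<in> set (right_premises \<phi> s) \<Longrightarrow> s \<le> s'"
  by (cases s; cases \<phi> rule: decomposable.cases) auto

lemma premises_subset:
  assumes "s' \<in> set (left_premises \<phi> s) \<union> set (right_premises \<phi> s)"
    "fst s \<subseteq> C" "snd s \<subseteq> C" "components \<phi> \<subseteq> C"
  shows "fst s' \<subseteq> C \<and> snd s' \<subseteq> C"
  using assms by (cases s; cases \<phi> rule: decomposable.cases) auto

lemma right_premise_eq_if_le:
  "i < length (right_premises \<phi> s) \<Longrightarrow> s \<le> s' \<Longrightarrow> right_premises \<phi> s ! i \<le> s'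
   \<Longrightarrow> right_premises \<phi> s' ! i = s'"
  by (cases s; cases s'; cases \<phi> rule: decomposable.cases) (auto simp: less_Suc_eq nth_Cons')

section \<open>Proof search\<close>

type_synonym ('p,'a) config = "('p,'a) sequent \<times> ('p,'a) fm option \<times> ('p,'a) fm option"

abbreviation cseq :: "('p,'a) config \<Rightarrow> ('p,'a) sequent" where "cseq c \<equiv> fst c"
abbreviation focus :: "('p,'a) config \<Rightarrow> ('p,'a) fm option" where "focus c \<equiv> fst (snd c)"
abbreviation loop_focus :: "('p,'a) config \<Rightarrow> ('p,'a) fm option" where "loop_focus c \<equiv> snd (snd c)"

definition is_axiom :: "('p,'a) sequent \<Rightarrow> bool" where
  "is_axiom s \<longleftrightarrow> Bot \<in> fst s \<or> fst s \<inter> snd s \<noteq> {}"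

definition expands_left :: "('p,'a) sequent \<Rightarrow> ('p,'a) fm \<Rightarrow> bool" where
  "expands_left s \<phi> \<longleftrightarrow> \<phi> \<in> fst s \<and> decomposable \<phi> \<and> (\<forall>s'\<in>set (left_premises \<phi> s). s' \<noteq> s)"

definition expands_right :: "('p,'a) sequent \<Rightarrow> ('p,'a) fm \<Rightarrow> bool" where
  "expands_right s \<phi> \<longleftrightarrow> \<phi> \<in> snd s \<and> decomposable \<phi> \<and> (\<forall>s'\<in>set (right_premises \<phi> s). s' \<noteq> s)"

definition saturated :: "('p,'a) sequent \<Rightarrow> bool" where
  "saturated s \<longleftrightarrow> \<not> (\<exists>\<phi>. expands_left s \<phi>) \<and> \<not> (\<exists>\<phi>. expands_right s \<phi>)"

definition loop_step :: "('p,'a) sequent \<Rightarrow> ('p,'a) fm \<Rightarrow> ('p,'a) fm \<Rightarrow> bool" where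
  "loop_step s \<sigma> \<sigma>' \<longleftrightarrow> \<sigma> \<in> snd s \<and> decomposable \<sigma> \<and>
     (\<exists>i<length (right_premises \<sigma> s). right_premises \<sigma> s ! i = s \<and> \<sigma>' = right_component \<sigma> i)"

definition escapes :: "('p,'a) sequent \<Rightarrow> ('p,'a) fm \<Rightarrow> bool" where
  "escapes s \<sigma> \<longleftrightarrow> (\<exists>\<sigma>'. (loop_step s)\<^sup>*\<^sup>* \<sigma> \<sigma>' \<and> \<not> decomposable \<sigma>')"

definition trapped :: "('p,'a) sequent \<Rightarrow> ('p,'a) fm \<Rightarrow> bool" where
  "trapped s \<sigma> \<longleftrightarrow> \<sigma> \<in> snd s \<and> \<not> escapes s \<sigma>"

text \<open>Phases: 0 axiom, 1 saturate the sequent, 2 decompose the focus, 3 unfold a trapped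
  formula, 4 apply (K) to some box of an atomic program.\<close>

definition phase :: "('p,'a) config \<Rightarrow> nat" where
  "phase c = (if is_axiom (cseq c) then 0 else if \<not> saturated (cseq c) then 1
     else if (\<exists>\<tau>. focus c = Some \<tau> \<and> decomposable \<tau>) then 2
     else if (\<exists>\<sigma>. trapped (cseq c) \<sigma>) then 3 else 4)"

datatype ('p,'a) move = MAx "('p,'a) rule" | MStep "('p,'a) rule" "('p,'a) config list" | MWorld

definition pick_left :: "('p,'a) sequent \<Rightarrow> ('p,'a) fm" where
  "pick_left s = (SOME \<phi>. expands_left s \<phi>)"

definition pick_right :: "('p,'a) sequent \<Rightarrow> ('p,'a) fm" where
  "pick_right s = (SOME \<phi>. expands_right s \<phi>)"

definition pick_trapped :: "('p,'a) config \<Rightarrow> ('p,'a) fm" where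
  "pick_trapped c = (if \<exists>\<sigma>. loop_focus c = Some \<sigma> \<and> trapped (cseq c) \<sigma> then the (loop_focus c)
     else SOME \<sigma>. trapped (cseq c) \<sigma>)"

definition next_move :: "('p,'a) config \<Rightarrow> ('p,'a) move" where
  "next_move c = (let s = cseq c in
     if is_axiom s then MAx (if Bot \<in> fst s then RBot else RAx)
     else if \<not> saturated s then
       (if \<exists>\<phi>. expands_left s \<phi> then
          MStep (left_rule (pick_left s)) (map (\<lambda>s'. (s', focus c, None)) (left_premises (pick_left s) s))
        else MStep (right_rule (pick_right s))
           (map (\<lambda>i. (right_premises (pick_right s) s ! i,
                      if focus c = Some (pick_right s) then Some (right_component (pick_right s) i)
                      else focus c, None))
              [0..<length (right_premises (pick_right s) s)]))
     else if \<exists>\<tau>. focus c = Some \<tau> \<and> decomposable \<tau> then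
       MStep (right_rule (the (focus c)))
         (map (\<lambda>i. (right_premises (the (focus c)) s ! i, Some (right_component (the (focus c)) i), None))
            [0..<length (right_premises (the (focus c)) s)])
     else if \<exists>\<sigma>. trapped s \<sigma> then
       MStep (right_rule (pick_trapped c))
         (map (\<lambda>i. (right_premises (pick_trapped c) s ! i, focus c,
                    if right_premises (pick_trapped c) s ! i = s
                    then Some (right_component (pick_trapped c) i) else None))
            [0..<length (right_premises (pick_trapped c) s)])
     else MWorld)"

definition modal_child :: "('p,'a) config \<Rightarrow> 'a \<Rightarrow> ('p,'a) fm \<Rightarrow> ('p,'a) config" where
  "modal_child c a Y = (({\<phi>. Box (At a) \<phi> \<in> fst (cseq c)}, {Y}), Some Y, None)"

definition follows :: "('p,'a) fm option \<Rightarrow> ('p,'a) rule \<Rightarrow> nat \<Rightarrow> ('p,'a) fm option \<Rightarrow> bool" where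
  "follows F r i F' \<longleftrightarrow> (F = None \<and> F' = None) \<or>
     (\<exists>\<tau> \<tau>'. F = Some \<tau> \<and> F' = Some \<tau>' \<and> tstep r i \<tau> \<tau>')"

abbreviation focus_follows :: "('p,'a) config \<Rightarrow> ('p,'a) rule \<Rightarrow> nat \<Rightarrow> ('p,'a) config \<Rightarrow> bool" where
  "focus_follows c r i c' \<equiv> follows (focus c) r i (focus c')"

abbreviation loop_follows :: "('p,'a) config \<Rightarrow> ('p,'a) rule \<Rightarrow> nat \<Rightarrow> ('p,'a) config \<Rightarrow> bool" where
  "loop_follows c r i c' \<equiv> follows (loop_focus c) r i (loop_focus c')"

definition records_focus :: "('p,'a) config \<Rightarrow> bool" where
  "records_focus c \<longleftrightarrow> phase c = 2 \<or> phase c = 4"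

definition loop_focus_trapped :: "('p,'a) config \<Rightarrow> bool" where
  "loop_focus_trapped c \<longleftrightarrow> (\<exists>\<sigma>. loop_focus c = Some \<sigma> \<and> trapped (cseq c) \<sigma>)"

definition records_loop :: "('p,'a) config \<Rightarrow> bool" where
  "records_loop c \<longleftrightarrow> phase c = 3 \<and> loop_focus_trapped c"

definition upd_focus_hist ::
  "('p,'a) config \<Rightarrow> ('p,'a) rule \<Rightarrow> nat \<Rightarrow> ('p,'a) config \<Rightarrow> 'x \<Rightarrow> 'x list \<Rightarrow> 'x list" where
  "upd_focus_hist c r i c' x H =
     (if focus_follows c r i c' then (if records_focus c then x # H else H) else [])"

definition upd_loop_hist ::
  "('p,'a) config \<Rightarrow> ('p,'a) rule \<Rightarrow> nat \<Rightarrow> ('p,'a) config \<Rightarrow> 'x \<Rightarrow> 'x list \<Rightarrow> 'x list" where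
  "upd_loop_hist c r i c' x H =
     (if focus_follows c r i c' \<and> loop_follows c r i c' then (if records_loop c then x # H else H) else [])"

text \<open>A history is emptied
  whenever the corresponding focus is dropped, and it only records configurations at which that
  focus is bound to move, so the focus traces from a companion to its buds form cycles
  that are not constant.\<close>

inductive derivable :: "('p,'a) config list \<Rightarrow> ('p,'a) config list \<Rightarrow> ('p,'a) config \<Rightarrow> bool" where
  derivable_axiom: "phase c = 0 \<Longrightarrow> derivable H1 H2 c"
| derivable_focus_bud: "c \<in> set H1 \<Longrightarrow> derivable H1 H2 c"
| derivable_loop_bud: "c \<in> set H2 \<Longrightarrow> derivable H1 H2 c"
| derivable_step: "next_move c = MStep r cs \<Longrightarrow>
    \<forall>i<length cs. derivable (upd_focus_hist c r i (cs!i) c H1) (upd_loop_hist c r i (cs!i) c H2) (cs!i)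
    \<Longrightarrow> derivable H1 H2 c"
| derivable_modal: "phase c = 4 \<Longrightarrow> Box (At a) Y \<in> snd (cseq c) \<Longrightarrow>
    derivable (upd_focus_hist c (RK (At a) Y) 0 (modal_child c a Y) c H1) [] (modal_child c a Y)
    \<Longrightarrow> derivable H1 H2 c"

lemma trapped_decomposable: "trapped s \<sigma> \<Longrightarrow> decomposable \<sigma>"
  unfolding trapped_def escapes_def by blast

lemma trapped_in: "trapped s \<sigma> \<Longrightarrow> \<sigma> \<in> snd s"
  unfolding trapped_def by blast

lemma loop_step_in: "loop_step s \<sigma> \<sigma>' \<Longrightarrow> \<sigma>' \<in> snd s"
  unfolding loop_step_def by (metis right_component_in_premise)

lemma loop_step_components: "loop_step s \<sigma> \<sigma>' \<Longrightarrow> \<sigma>' \<in> components \<sigma>"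
  unfolding loop_step_def using right_component_components by blast

lemma trapped_loop_step: "trapped s \<sigma> \<Longrightarrow> loop_step s \<sigma> \<sigma>' \<Longrightarrow> trapped s \<sigma>'"
  unfolding trapped_def escapes_def
  by (auto intro: converse_rtranclp_into_rtranclp loop_step_in)

lemma expands_left_pick_left: "\<exists>\<phi>. expands_left s \<phi> \<Longrightarrow> expands_left s (pick_left s)"
  unfolding pick_left_def by (rule someI_ex)

lemma expands_right_pick_right: "\<exists>\<phi>. expands_right s \<phi> \<Longrightarrow> expands_right s (pick_right s)"
  unfolding pick_right_def by (rule someI_ex)

lemma trapped_pick_trapped: "\<exists>\<sigma>. trapped (cseq c) \<sigma> \<Longrightarrow> trapped (cseq c) (pick_trapped c)"
  unfolding pick_trapped_def by (auto intro: someI_ex)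

lemma phase_cases: "phase c = 0 \<or> phase c = 1 \<or> phase c = 2 \<or> phase c = 3 \<or> phase c = 4"
  unfolding phase_def by auto

lemma phase_0_iff: "phase c = 0 \<longleftrightarrow> is_axiom (cseq c)"
  unfolding phase_def by auto

lemma phase_4_iff:
  "phase c = 4 \<longleftrightarrow> \<not> is_axiom (cseq c) \<and> saturated (cseq c)
     \<and> \<not> (\<exists>\<tau>. focus c = Some \<tau> \<and> decomposable \<tau>) \<and> \<not> (\<exists>\<sigma>. trapped (cseq c) \<sigma>)"
  unfolding phase_def by auto

lemma phase_2_saturated: "phase c = 2 \<Longrightarrow> saturated (cseq c) \<and> \<not> is_axiom (cseq c)"
  unfolding phase_def by (auto split: if_splits)

lemma phase_3_saturated:
  "phase c = 3 \<Longrightarrow> saturated (cseq c) \<and> \<not> is_axiom (cseq c) \<and> \<not> (\<exists>\<tau>. focus c = Some \<tau> \<and> decomposable \<tau>)"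
  unfolding phase_def by (auto split: if_splits)

lemma next_move_MWorld_iff: "next_move c = MWorld \<longleftrightarrow> phase c = 4"
  unfolding next_move_def phase_def Let_def by auto

lemma next_move_phase_0: "phase c = 0 \<Longrightarrow> \<exists>r. next_move c = MAx r"
  unfolding next_move_def phase_def Let_def by (auto split: if_splits)

lemma next_move_phase_1_left:
  "phase c = 1 \<Longrightarrow> \<exists>\<phi>. expands_left (cseq c) \<phi> \<Longrightarrow>
   next_move c = MStep (left_rule (pick_left (cseq c)))
     (map (\<lambda>s'. (s', focus c, None)) (left_premises (pick_left (cseq c)) (cseq c)))"
  unfolding next_move_def phase_def Let_def by (auto split: if_splits)

lemma next_move_phase_1_right:
  "phase c = 1 \<Longrightarrow> \<not> (\<exists>\<phi>. expands_left (cseq c) \<phi>) \<Longrightarrow>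
   next_move c = MStep (right_rule (pick_right (cseq c)))
     (map (\<lambda>i. (right_premises (pick_right (cseq c)) (cseq c) ! i,
                if focus c = Some (pick_right (cseq c)) then Some (right_component (pick_right (cseq c)) i)
                else focus c, None))
        [0..<length (right_premises (pick_right (cseq c)) (cseq c))])
   \<and> expands_right (cseq c) (pick_right (cseq c))"
  unfolding next_move_def phase_def Let_def
  by (auto split: if_splits intro!: expands_right_pick_right simp: saturated_def)

lemma next_move_phase_2:
  "phase c = 2 \<Longrightarrow> \<exists>\<tau>. focus c = Some \<tau> \<and> decomposable \<tau> \<and>
   next_move c = MStep (right_rule \<tau>)
     (map (\<lambda>i. (right_premises \<tau> (cseq c) ! i, Some (right_component \<tau> i), None))
        [0..<length (right_premises \<tau> (cseq c))])"
  unfolding next_move_def phase_def Let_def by (auto split: if_splits)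

lemma next_move_phase_3:
  "phase c = 3 \<Longrightarrow> trapped (cseq c) (pick_trapped c) \<and>
   next_move c = MStep (right_rule (pick_trapped c))
     (map (\<lambda>i. (right_premises (pick_trapped c) (cseq c) ! i, focus c,
                if right_premises (pick_trapped c) (cseq c) ! i = cseq c
                then Some (right_component (pick_trapped c) i) else None))
        [0..<length (right_premises (pick_trapped c) (cseq c))])"
  unfolding next_move_def phase_def Let_def by (auto split: if_splits intro: trapped_pick_trapped)

lemma next_move_MStep_phase: "next_move c = MStep r cs \<Longrightarrow> phase c = 1 \<or> phase c = 2 \<or> phase c = 3"
  using phase_cases[of c] next_move_phase_0[of c] next_move_MWorld_iff[of c] by auto

lemma next_move_MAx: "next_move c = MAx r \<Longrightarrow> phase c = 0 \<and> rinst r [] (cseq c) \<and> (r = RAx \<or> r = RBot)"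
proof -
  assume m: "next_move c = MAx r"
  have p: "phase c = 0"
    using phase_cases[of c] m next_move_MWorld_iff[of c] next_move_phase_1_left[of c]
      next_move_phase_1_right[of c] next_move_phase_2[of c] next_move_phase_3[of c] by auto
  obtain G D where s: "cseq c = (G, D)" by (cases "cseq c")
  show ?thesis
  proof (cases "Bot \<in> G")
    case True
    then have "rinst RBot [] (G, D)" using rinst.bot[of G D] by (simp add: insert_absorb)
    then show ?thesis using p m s True unfolding next_move_def by (auto simp: phase_0_iff)
  next
    case False
    then have "rinst RAx [] (G, D)" using p s by (auto simp: phase_0_iff is_axiom_def intro: rinst.ax)
    then show ?thesis using p m s False unfolding next_move_def by (auto simp: phase_0_iff)
  qed
qed

lemma step_rinst:
  assumes m: "next_move c = MStep r cs" and w: "set_option (focus c) \<subseteq> snd (cseq c)"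
  shows "cs \<noteq> [] \<and> length cs \<le> 2 \<and> rinst r (map fst cs) (cseq c) \<and> (\<forall>p f. r \<noteq> RK p f \<and> r \<noteq> RCut f)"
proof -
  consider "phase c = 1" "\<exists>\<phi>. expands_left (cseq c) \<phi>" | "phase c = 1" "\<not> (\<exists>\<phi>. expands_left (cseq c) \<phi>)"
    | "phase c = 2" | "phase c = 3" using next_move_MStep_phase[OF m] by blast
  then show ?thesis
  proof cases
    case 1
    let ?\<phi> = "pick_left (cseq c)"
    have u: "expands_left (cseq c) ?\<phi>" using 1 expands_left_pick_left by blast
    have "map fst cs = left_premises ?\<phi> (cseq c)" using next_move_phase_1_left[OF 1] m by (simp add: comp_def)
    then show ?thesis using u next_move_phase_1_left[OF 1] m length_left_premises[of ?\<phi> "cseq c"]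
        rinst_left_rule[of ?\<phi> "cseq c"] left_rule_neq[of ?\<phi>]
      by (auto simp: expands_left_def)
  next
    case 2
    let ?\<phi> = "pick_right (cseq c)"
    have u: "expands_right (cseq c) ?\<phi>" using next_move_phase_1_right[OF 2] by blast
    have "map fst cs = right_premises ?\<phi> (cseq c)"
      using next_move_phase_1_right[OF 2] m by (auto intro: nth_equalityI)
    then show ?thesis using u next_move_phase_1_right[OF 2] m length_right_premises[of ?\<phi> "cseq c"]
        rinst_right_rule[of ?\<phi> "cseq c"] right_rule_neq[of ?\<phi>]
      by (auto simp: expands_right_def)
  next
    case 3
    obtain \<tau> where t: "focus c = Some \<tau>" "decomposable \<tau>" and m': "next_move c = MStep (right_rule \<tau>)
         (map (\<lambda>i. (right_premises \<tau> (cseq c) ! i, Some (right_component \<tau> i), None))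
            [0..<length (right_premises \<tau> (cseq c))])"
      using next_move_phase_2[OF 3] by blast
    have "\<tau> \<in> snd (cseq c)" using t w by auto
    moreover have "map fst cs = right_premises \<tau> (cseq c)" using m' m by (auto intro: nth_equalityI)
    ultimately show ?thesis using t m' m length_right_premises[of \<tau> "cseq c"] right_rule_neq[of \<tau>]
        rinst_right_rule[of \<tau> "cseq c"]
      by auto
  next
    case 4
    let ?\<sigma> = "pick_trapped c"
    have b: "trapped (cseq c) ?\<sigma>" using next_move_phase_3[OF 4] by blast
    have "map fst cs = right_premises ?\<sigma> (cseq c)"
      using next_move_phase_3[OF 4] m by (auto intro: nth_equalityI)
    then show ?thesis using b next_move_phase_3[OF 4] m length_right_premises[of ?\<sigma> "cseq c"]
        rinst_right_rule[of ?\<sigma> "cseq c"] right_rule_neq[of ?\<sigma>] trapped_decomposable[OF b] trapped_in[OF b]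
      by auto
  qed
qed

lemma step_cases:
  assumes "next_move c = MStep r cs" "i < length cs"
  obtains (left) "phase c = 1" "\<exists>\<phi>. expands_left (cseq c) \<phi>"
      "cs ! i = (left_premises (pick_left (cseq c)) (cseq c) ! i, focus c, None)"
      "i < length (left_premises (pick_left (cseq c)) (cseq c))"
      "r = left_rule (pick_left (cseq c))" "expands_left (cseq c) (pick_left (cseq c))"
  | (right) "phase c = 1" "\<not> (\<exists>\<phi>. expands_left (cseq c) \<phi>)"
      "cs ! i = (right_premises (pick_right (cseq c)) (cseq c) ! i,
         if focus c = Some (pick_right (cseq c)) then Some (right_component (pick_right (cseq c)) i)
         else focus c, None)"
      "i < length (right_premises (pick_right (cseq c)) (cseq c))"
      "r = right_rule (pick_right (cseq c))" "expands_right (cseq c) (pick_right (cseq c))"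
  | (focus) \<tau> where "phase c = 2" "focus c = Some \<tau>" "decomposable \<tau>"
      "cs ! i = (right_premises \<tau> (cseq c) ! i, Some (right_component \<tau> i), None)"
      "i < length (right_premises \<tau> (cseq c))" "r = right_rule \<tau>"
  | (loop) "phase c = 3"
      "cs ! i = (right_premises (pick_trapped c) (cseq c) ! i, focus c,
         if right_premises (pick_trapped c) (cseq c) ! i = cseq c
         then Some (right_component (pick_trapped c) i) else None)"
      "i < length (right_premises (pick_trapped c) (cseq c))" "r = right_rule (pick_trapped c)"
      "trapped (cseq c) (pick_trapped c)"
proof -
  consider "phase c = 1" "\<exists>\<phi>. expands_left (cseq c) \<phi>" | "phase c = 1" "\<not> (\<exists>\<phi>. expands_left (cseq c) \<phi>)"
    | "phase c = 2" | "phase c = 3" using next_move_MStep_phase[OF assms(1)] by blast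
  then show thesis
  proof cases
    case 1
    show thesis
      by (rule left[OF 1]) (use next_move_phase_1_left[OF 1] expands_left_pick_left[OF 1(2)] assms in auto)
  next
    case 2
    then show thesis using right next_move_phase_1_right[OF 2] assms by auto
  next
    case 3
    then show thesis using focus next_move_phase_2[OF 3] assms by auto
  next
    case 4
    then show thesis using loop next_move_phase_3[OF 4] assms by auto
  qed
qed

lemma step_le:
  assumes "next_move c = MStep r cs" "i < length cs"
  shows "cseq c \<le> cseq (cs!i)"
  by (rule step_cases[OF assms]) (simp_all, (metis nth_mem left_premises_ge right_premises_ge)+)

lemma step_saturates:
  assumes "next_move c = MStep r cs" "i < length cs" "phase c = 1"
  shows "cseq (cs!i) \<noteq> cseq c"
  by (rule step_cases[OF assms(1,2)]) (use assms(3) in \<open>auto simp: expands_left_def expands_right_def\<close>)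

lemma follows_refl: "(\<And>p f. r \<noteq> RK p f) \<Longrightarrow> follows F r i F"
  by (cases F) (auto simp: follows_def intro: tstep_refl)

lemma step_focus_follows:
  assumes "next_move c = MStep r cs" "i < length cs"
  shows "focus_follows c r i (cs!i)"
proof (rule step_cases[OF assms])
  assume "cs ! i = (left_premises (pick_left (cseq c)) (cseq c) ! i, focus c, None)"
    "r = left_rule (pick_left (cseq c))" "expands_left (cseq c) (pick_left (cseq c))"
  then show ?thesis by (auto intro!: follows_refl left_rule_neq simp: expands_left_def)
next
  assume "cs ! i = (right_premises (pick_right (cseq c)) (cseq c) ! i,
      if focus c = Some (pick_right (cseq c)) then Some (right_component (pick_right (cseq c)) i)
      else focus c, None)"
    "i < length (right_premises (pick_right (cseq c)) (cseq c))"
    "r = right_rule (pick_right (cseq c))" "expands_right (cseq c) (pick_right (cseq c))"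
  then show ?thesis using tstep_right_component[of "pick_right (cseq c)" i "cseq c"]
      follows_refl[of r "focus c" i] right_rule_neq[of "pick_right (cseq c)"]
    by (cases "focus c = Some (pick_right (cseq c))") (auto simp: follows_def expands_right_def)
next
  fix \<tau> assume "focus c = Some \<tau>" "decomposable \<tau>"
    "cs ! i = (right_premises \<tau> (cseq c) ! i, Some (right_component \<tau> i), None)"
    "i < length (right_premises \<tau> (cseq c))" "r = right_rule \<tau>"
  then show ?thesis using tstep_right_component[of \<tau> i "cseq c"] by (auto simp: follows_def)
next
  assume "cs ! i = (right_premises (pick_trapped c) (cseq c) ! i, focus c,
      if right_premises (pick_trapped c) (cseq c) ! i = cseq c
      then Some (right_component (pick_trapped c) i) else None)"
    "r = right_rule (pick_trapped c)" "trapped (cseq c) (pick_trapped c)"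
  then show ?thesis by (auto intro!: follows_refl right_rule_neq dest: trapped_decomposable)
qed

definition focus_step :: "('p,'a) config \<Rightarrow> nat \<Rightarrow> ('p,'a) config \<Rightarrow> bool" where
  "focus_step c i c' \<longleftrightarrow> focus c' = focus c \<or>
     (\<exists>\<tau>. focus c = Some \<tau> \<and> decomposable \<tau> \<and> i < length (right_premises \<tau> (cseq c))
        \<and> cseq c' = right_premises \<tau> (cseq c) ! i \<and> focus c' = Some (right_component \<tau> i))"

lemma step_focus_step:
  assumes "next_move c = MStep r cs" "i < length cs"
  shows "focus_step c i (cs!i)"
  by (rule step_cases[OF assms]) (auto simp: focus_step_def expands_right_def)

lemma step_phase_2:
  assumes "next_move c = MStep r cs" "i < length cs" "phase c = 2"
  shows "focus (cs!i) \<noteq> focus c \<and> loop_focus (cs!i) = None \<and> (cseq (cs!i) = cseq c \<longrightarrow> phase (cs!i) \<ge> 2)"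
proof (rule step_cases[OF assms(1,2)])
  fix \<tau> assume p: "phase c = 2" and a: "focus c = Some \<tau>" "decomposable \<tau>"
    "cs ! i = (right_premises \<tau> (cseq c) ! i, Some (right_component \<tau> i), None)"
    "i < length (right_premises \<tau> (cseq c))"
  have "right_component \<tau> i \<noteq> \<tau>" using components_neq right_component_components a by blast
  moreover have "cseq (cs!i) = cseq c \<Longrightarrow> phase (cs!i) \<ge> 2"
    using phase_2_saturated[OF p] unfolding phase_def by auto
  ultimately show ?thesis using a by auto
qed (use assms(3) in auto)

lemma step_phase_3:
  assumes "next_move c = MStep r cs" "i < length cs" "phase c = 3"
  shows "focus (cs!i) = focus c \<and> (cseq (cs!i) = cseq c \<longrightarrow> phase (cs!i) = 3 \<and> loop_focus_trapped (cs!i))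
   \<and> (cseq (cs!i) \<noteq> cseq c \<longrightarrow> loop_focus (cs!i) = None)
   \<and> (loop_focus_trapped c \<longrightarrow> cseq (cs!i) = cseq c \<longrightarrow>
        loop_follows c r i (cs!i) \<and> loop_focus (cs!i) \<noteq> loop_focus c)"
proof (rule step_cases[OF assms(1,2)])
  let ?\<sigma> = "pick_trapped c"
  assume p: "phase c = 3"
    and ci: "cs ! i = (right_premises ?\<sigma> (cseq c) ! i, focus c,
      if right_premises ?\<sigma> (cseq c) ! i = cseq c then Some (right_component ?\<sigma> i) else None)"
    and il: "i < length (right_premises ?\<sigma> (cseq c))" and r: "r = right_rule ?\<sigma>"
    and b: "trapped (cseq c) ?\<sigma>"
  have "\<not> (\<exists>\<tau>. focus c = Some \<tau> \<and> decomposable \<tau>)" "saturated (cseq c)" "\<not> is_axiom (cseq c)"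
    using phase_3_saturated[OF p] by auto
  moreover
  { assume eq: "right_premises ?\<sigma> (cseq c) ! i = cseq c"
    have "loop_step (cseq c) ?\<sigma> (right_component ?\<sigma> i)"
      using b eq il trapped_decomposable trapped_in unfolding loop_step_def by blast
    then have b': "trapped (cseq c) (right_component ?\<sigma> i)" by (rule trapped_loop_step[OF b])
    have "loop_follows c r i (cs ! i) \<and> loop_focus (cs!i) \<noteq> loop_focus c" if lt: "loop_focus_trapped c"
    proof -
      obtain \<sigma> where \<sigma>: "loop_focus c = Some \<sigma>" "trapped (cseq c) \<sigma>"
        using lt by (auto simp: loop_focus_trapped_def)
      then have "?\<sigma> = \<sigma>" by (auto simp: pick_trapped_def)
      then show ?thesis using \<sigma> ci eq r il tstep_right_component[of \<sigma> i "cseq c"] trapped_decomposable[OF \<sigma>(2)]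
          components_neq[OF right_component_components[of \<sigma> i "cseq c"]]
        by (auto simp: follows_def)
    qed
    note b' this }
  ultimately show ?thesis using ci by (auto simp: phase_def loop_focus_trapped_def)
qed (use assms(3) in auto)

lemma records_focus_step:
  "records_focus c \<Longrightarrow> next_move c = MStep r cs \<Longrightarrow> i < length cs \<Longrightarrow> focus (cs!i) \<noteq> focus c"
  using step_phase_2[of c r cs i] next_move_MWorld_iff[of c] by (auto simp: records_focus_def)

lemma records_loop_step:
  assumes "records_loop c" "next_move c = MStep r cs" "i < length cs" "loop_follows c r i (cs!i)"
  shows "loop_focus (cs!i) \<noteq> loop_focus c"
proof -
  have p: "phase c = 3" "loop_focus_trapped c" using assms(1) by (auto simp: records_loop_def)
  show ?thesis
  proof (cases "cseq (cs!i) = cseq c")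
    case True then show ?thesis using step_phase_3[OF assms(2,3) p(1)] p by auto
  next
    case False then have "loop_focus (cs!i) = None" using step_phase_3[OF assms(2,3) p(1)] by auto
    then show ?thesis using assms(4) p(2) by (auto simp: follows_def loop_focus_trapped_def)
  qed
qed

lemma rinst_modal_child:
  "Box (At a) Y \<in> snd (cseq c) \<Longrightarrow> rinst (RK (At a) Y) [cseq (modal_child c a Y)] (cseq c)"
proof -
  assume a: "Box (At a) Y \<in> snd (cseq c)"
  obtain G D where s: "cseq c = (G, D)" by (cases "cseq c")
  have "rinst (RK (At a) Y) [({\<phi>. Box (At a) \<phi> \<in> G}, {Y})]
      (G \<union> Box (At a) ` {\<phi>. Box (At a) \<phi> \<in> G}, insert (Box (At a) Y) D)"
    by (rule rinst.k)
  moreover have "G \<union> Box (At a) ` {\<phi>. Box (At a) \<phi> \<in> G} = G" by auto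
  moreover have "insert (Box (At a) Y) D = D" using a s by auto
  ultimately show ?thesis using s by (simp add: modal_child_def)
qed

lemma records_focus_modal_child:
  "records_focus c \<Longrightarrow> focus_follows c (RK (At a) Y) 0 (modal_child c a Y) \<Longrightarrow> focus (modal_child c a Y) \<noteq> focus c"
  by (auto simp: follows_def modal_child_def)

definition components_closed :: "('p,'a) fm set \<Rightarrow> bool" where
  "components_closed C \<longleftrightarrow> (\<forall>\<phi>\<in>C. components \<phi> \<subseteq> C)"

definition wf_config :: "('p,'a) fm set \<Rightarrow> ('p,'a) config \<Rightarrow> bool" where
  "wf_config C c \<longleftrightarrow> fst (cseq c) \<subseteq> C \<and> snd (cseq c) \<subseteq> C \<and> set_option (focus c) \<subseteq> snd (cseq c)
     \<and> set_option (loop_focus c) \<subseteq> snd (cseq c)"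

lemma wf_config_premise:
  assumes "components_closed C" "wf_config C c" "\<phi> \<in> fst (cseq c) \<union> snd (cseq c)"
    "s' \<in> set (left_premises \<phi> (cseq c)) \<union> set (right_premises \<phi> (cseq c))"
  shows "fst s' \<subseteq> C \<and> snd s' \<subseteq> C \<and> cseq c \<le> s'"
proof -
  have "components \<phi> \<subseteq> C" using assms(1-3) unfolding components_closed_def wf_config_def by blast
  then show ?thesis using assms premises_subset[of s' \<phi> "cseq c" C] left_premises_ge right_premises_ge
    unfolding wf_config_def by blast
qed

lemma step_wf_config:
  assumes cl: "components_closed C" and w: "wf_config C c"
    and m: "next_move c = MStep r cs" and i: "i < length cs"
  shows "wf_config C (cs!i)"
proof (rule step_cases[OF m i])
  let ?\<phi> = "pick_left (cseq c)"
  assume "cs ! i = (left_premises ?\<phi> (cseq c) ! i, focus c, None)" "i < length (left_premises ?\<phi> (cseq c))"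
    "expands_left (cseq c) ?\<phi>"
  then show ?thesis using w wf_config_premise[OF cl w, of ?\<phi> "left_premises ?\<phi> (cseq c) ! i"]
    by (auto simp: wf_config_def expands_left_def less_eq_prod_def)
next
  let ?\<phi> = "pick_right (cseq c)"
  assume "cs ! i = (right_premises ?\<phi> (cseq c) ! i,
      if focus c = Some ?\<phi> then Some (right_component ?\<phi> i) else focus c, None)"
    "i < length (right_premises ?\<phi> (cseq c))" "expands_right (cseq c) ?\<phi>"
  then show ?thesis using w wf_config_premise[OF cl w, of ?\<phi> "right_premises ?\<phi> (cseq c) ! i"]
      right_component_in_premise[of i ?\<phi> "cseq c"]
    by (auto simp: wf_config_def expands_right_def less_eq_prod_def)
next
  fix \<tau> assume "focus c = Some \<tau>" "cs ! i = (right_premises \<tau> (cseq c) ! i, Some (right_component \<tau> i), None)"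
    "i < length (right_premises \<tau> (cseq c))"
  then show ?thesis using w wf_config_premise[OF cl w, of \<tau> "right_premises \<tau> (cseq c) ! i"]
      right_component_in_premise[of i \<tau> "cseq c"]
    by (auto simp: wf_config_def less_eq_prod_def)
next
  let ?\<sigma> = "pick_trapped c"
  assume "cs ! i = (right_premises ?\<sigma> (cseq c) ! i, focus c,
      if right_premises ?\<sigma> (cseq c) ! i = cseq c then Some (right_component ?\<sigma> i) else None)"
    "i < length (right_premises ?\<sigma> (cseq c))" "trapped (cseq c) ?\<sigma>"
  then show ?thesis using w wf_config_premise[OF cl w, of ?\<sigma> "right_premises ?\<sigma> (cseq c) ! i"]
      right_component_in_premise[of i ?\<sigma> "cseq c"] trapped_in[of "cseq c" ?\<sigma>]
    by (auto simp: wf_config_def less_eq_prod_def)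
qed

lemma wf_config_modal_child:
  "components_closed C \<Longrightarrow> wf_config C c \<Longrightarrow> Box (At a) Y \<in> snd (cseq c) \<Longrightarrow> wf_config C (modal_child c a Y)"
  unfolding components_closed_def wf_config_def modal_child_def by fastforce

subsection \<open>Termination of proof search\<close>

definition configs :: "('p,'a) fm set \<Rightarrow> ('p,'a) config set" where
  "configs C = {c. wf_config C c}"

lemma finite_configs: "finite C \<Longrightarrow> finite (configs C)"
proof -
  assume f: "finite C"
  let ?O = "insert None (Some ` C)"
  have "configs C \<subseteq> (Pow C \<times> Pow C) \<times> ?O \<times> ?O"
  proof
    fix c assume "c \<in> configs C"
    moreover obtain G D o1 o2 where "c = ((G, D), o1, o2)" by (cases c) auto
    ultimately show "c \<in> (Pow C \<times> Pow C) \<times> ?O \<times> ?O"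
      by (cases o1; cases o2) (auto simp: configs_def wf_config_def)
  qed
  moreover have "finite ((Pow C \<times> Pow C) \<times> ?O \<times> ?O)" using f by auto
  ultimately show ?thesis by (rule finite_subset)
qed

definition hist_inv :: "('p,'a) fm set \<Rightarrow> ('p,'a) config list \<Rightarrow> ('p,'a) config list \<Rightarrow> bool" where
  "hist_inv C H1 H2 \<longleftrightarrow> distinct H1 \<and> set H1 \<subseteq> configs C \<and> distinct H2 \<and> set H2 \<subseteq> configs C"

lemma hist_inv_length:
  "finite C \<Longrightarrow> hist_inv C H1 H2 \<Longrightarrow> length H1 \<le> card (configs C) \<and> length H2 \<le> card (configs C)"
  unfolding hist_inv_def by (metis card_mono distinct_card finite_configs)

lemma hist_inv_upd:
  assumes "hist_inv C H1 H2" "wf_config C c" "c \<notin> set H1" "c \<notin> set H2"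
  shows "hist_inv C (upd_focus_hist c r i c' c H1) (upd_loop_hist c r i c' c H2)"
  using assms unfolding hist_inv_def upd_focus_hist_def upd_loop_hist_def configs_def by auto

definition cosize :: "('p,'a) fm set \<Rightarrow> ('p,'a) sequent \<Rightarrow> nat" where
  "cosize C s = card (C - fst s) + card (C - snd s)"

lemma cosize_less:
  assumes "finite C" "s < s'" "fst s' \<subseteq> C" "snd s' \<subseteq> C"
  shows "cosize C s' < cosize C s"
proof -
  have le: "card (C - fst s') \<le> card (C - fst s)" "card (C - snd s') \<le> card (C - snd s)"
    using assms by (auto simp: less_le less_eq_prod_def intro!: card_mono)
  have "fst s \<subset> fst s' \<or> snd s \<subset> snd s'"
    using assms(2) by (cases s; cases s') (auto simp: less_le)
  then have "C - fst s' \<subset> C - fst s \<or> C - snd s' \<subset> C - snd s"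
    using assms(3,4) by blast
  then have "card (C - fst s') < card (C - fst s) \<or> card (C - snd s') < card (C - snd s)"
    using assms(1) by (auto intro: psubset_card_mono)
  then show ?thesis using le unfolding cosize_def by linarith
qed

definition phase_rank :: "('p,'a) config \<Rightarrow> nat" where
  "phase_rank c = (if phase c = 2 then 2 else if phase c = 3 \<and> \<not> loop_focus_trapped c then 1 else 0)"

definition hist_room ::
  "('p,'a) fm set \<Rightarrow> ('p,'a) config \<times> ('p,'a) config list \<times> ('p,'a) config list \<Rightarrow> nat" where
  "hist_room C x = (case x of (c, H1, H2) \<Rightarrow>
     if phase c = 2 then card (configs C) - length H1
     else if phase c = 3 then card (configs C) - length H2 else 0)"

text \<open>Each search step either enlarges the sequent, or stays at the same sequent and lowers the
  phase, or stays in phase 2 or 3 and records the configuration on a history, which cannot grow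
  beyond the finitely many configurations.\<close>

definition search_measure ::
  "('p,'a) fm set \<Rightarrow> (('p,'a) config \<times> ('p,'a) config list \<times> ('p,'a) config list) rel" where
  "search_measure C = measures [\<lambda>(c, H1, H2). cosize C (cseq c), \<lambda>(c, H1, H2). phase_rank c, hist_room C]"

lemma wf_search_measure: "wf (search_measure C)"
  unfolding search_measure_def by simp

lemma search_measure_step:
  assumes fin: "finite C" and cl: "components_closed C" and w: "wf_config C c" and hi: "hist_inv C H1 H2"
    and nH: "c \<notin> set H1" "c \<notin> set H2" and m: "next_move c = MStep r cs" and i: "i < length cs"
  shows "((cs!i, upd_focus_hist c r i (cs!i) c H1, upd_loop_hist c r i (cs!i) c H2), (c, H1, H2))
           \<in> search_measure C"
proof -
  let ?c = "cs ! i"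
  have w': "wf_config C ?c" by (rule step_wf_config[OF cl w m i])
  have H1': "upd_focus_hist c r i ?c c H1 = (if records_focus c then c # H1 else H1)"
    using step_focus_follows[OF m i] unfolding upd_focus_hist_def by simp
  have "hist_inv C (c # H1) (c # H2)" using hi nH w by (auto simp: hist_inv_def configs_def)
  then have len: "length (c # H1) \<le> card (configs C)" "length (c # H2) \<le> card (configs C)"
    using hist_inv_length[OF fin] by blast+
  show ?thesis
  proof (cases "cseq ?c = cseq c")
    case False
    have "cseq c < cseq ?c" using step_le[OF m i] False by (simp add: less_le)
    then have "cosize C (cseq ?c) < cosize C (cseq c)"
      using cosize_less[OF fin] w' by (auto simp: wf_config_def)
    then show ?thesis by (simp add: search_measure_def)
  next
    case same: True
    consider "phase c = 2" | "phase c = 3"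
      using next_move_MStep_phase[OF m] step_saturates[OF m i] same by auto
    then show ?thesis
    proof cases
      case 1
      have "phase ?c \<ge> 2" using step_phase_2[OF m i 1] same by auto
      then show ?thesis
        using 1 same H1' len(1)
        by (auto simp: search_measure_def phase_rank_def hist_room_def records_focus_def)
    next
      case 2
      have s3: "phase ?c = 3" "loop_focus_trapped ?c" using step_phase_3[OF m i 2] same by auto
      show ?thesis
      proof (cases "loop_focus_trapped c")
        case False
        then show ?thesis using 2 s3 same by (simp add: search_measure_def phase_rank_def)
      next
        case True
        have "loop_follows c r i ?c" using step_phase_3[OF m i 2] same True by auto
        then have "upd_loop_hist c r i ?c c H2 = c # H2"
          using step_focus_follows[OF m i] 2 True unfolding upd_loop_hist_def records_loop_def by simp
        then show ?thesis
          using 2 s3 same True len(2) by (auto simp: search_measure_def phase_rank_def hist_room_def)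
      qed
    qed
  qed
qed

definition focus_reaches :: "('p,'a) config \<Rightarrow> ('p,'a) config \<Rightarrow> bool" where
  "focus_reaches c c' \<longleftrightarrow> (focus c = None \<and> focus c' = None) \<or>
     (\<exists>\<tau> \<tau>'. focus c = Some \<tau> \<and> focus c' = Some \<tau>' \<and> (loop_step (cseq c'))\<^sup>*\<^sup>* \<tau> \<tau>')"

lemma focus_reaches_refl: "focus_reaches c c"
  by (cases "focus c") (auto simp: focus_reaches_def)

lemma focus_reaches_step:
  assumes "focus_step c i c1" "focus_reaches c1 c'" "wf_config C c" "cseq c1 \<le> cseq c'" "cseq c \<le> cseq c'"
  shows "focus_reaches c c'"
  using assms(1) unfolding focus_step_def
proof (elim disjE exE conjE)
  assume "focus c1 = focus c" then show ?thesis using assms(2) by (simp add: focus_reaches_def)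
next
  fix \<tau> assume \<tau>: "focus c = Some \<tau>" "decomposable \<tau>" "i < length (right_premises \<tau> (cseq c))"
    "cseq c1 = right_premises \<tau> (cseq c) ! i" "focus c1 = Some (right_component \<tau> i)"
  have "\<tau> \<in> snd (cseq c')" using assms(3,5) \<tau>(1) by (auto simp: wf_config_def less_eq_prod_def)
  moreover have "right_premises \<tau> (cseq c') ! i = cseq c'"
    using right_premise_eq_if_le[OF \<tau>(3) assms(5)] \<tau>(4) assms(4) by simp
  ultimately have "loop_step (cseq c') \<tau> (right_component \<tau> i)"
    using \<tau>(2,3) length_right_premises_indep[of \<tau> "cseq c" "cseq c'"] unfolding loop_step_def by auto
  then show ?thesis using assms(2) \<tau> by (auto simp: focus_reaches_def intro: converse_rtranclp_into_rtranclp)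
qed

lemma search_reaches_world:
  assumes fin: "finite C" and cl: "components_closed C"
  shows "\<not> derivable H1 H2 c \<Longrightarrow> wf_config C c \<Longrightarrow> hist_inv C H1 H2 \<Longrightarrow>
    \<exists>c' H1' H2'. \<not> derivable H1' H2' c' \<and> phase c' = 4 \<and> wf_config C c' \<and> hist_inv C H1' H2'
      \<and> cseq c \<le> cseq c' \<and> (\<exists>H. H1' = H @ H1) \<and> focus_reaches c c'"
  using wf_search_measure[of C]
proof (induction "(c, H1, H2)" arbitrary: c H1 H2 rule: wf_induct_rule)
  case less
  have nH: "c \<notin> set H1" "c \<notin> set H2" "phase c \<noteq> 0"
    using less.prems(1) derivable.intros(1-3) by blast+
  show ?case
  proof (cases "phase c = 4")
    case True
    then show ?thesis using less.prems focus_reaches_refl by blast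
  next
    case False
    then obtain r cs where m: "next_move c = MStep r cs"
      using nH(3) next_move_MAx[of c] next_move_MWorld_iff[of c] by (cases "next_move c") auto
    obtain i where i: "i < length cs"
      and nD: "\<not> derivable (upd_focus_hist c r i (cs!i) c H1) (upd_loop_hist c r i (cs!i) c H2) (cs!i)"
      using less.prems(1) derivable_step[OF m] by blast
    have "\<exists>c' H1' H2'. \<not> derivable H1' H2' c' \<and> phase c' = 4 \<and> wf_config C c' \<and> hist_inv C H1' H2'
      \<and> cseq (cs!i) \<le> cseq c' \<and> (\<exists>H. H1' = H @ upd_focus_hist c r i (cs!i) c H1) \<and> focus_reaches (cs!i) c'"
      by (rule less.hyps[OF search_measure_step[OF fin cl less.prems(2,3) nH(1,2) m i] nD
          step_wf_config[OF cl less.prems(2) m i] hist_inv_upd[OF less.prems(3,2) nH(1,2)]])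
    then obtain c' H1' H2' where IH: "\<not> derivable H1' H2' c'" "phase c' = 4" "wf_config C c'"
        "hist_inv C H1' H2'"
        "cseq (cs!i) \<le> cseq c'" "\<exists>H. H1' = H @ upd_focus_hist c r i (cs!i) c H1" "focus_reaches (cs!i) c'"
      by blast
    have le: "cseq c \<le> cseq c'" using order_trans[OF step_le[OF m i] IH(5)] .
    have "\<exists>H. H1' = H @ H1"
      using IH(6) step_focus_follows[OF m i] by (auto simp: upd_focus_hist_def split: if_splits)
    moreover have "focus_reaches c c'"
      using focus_reaches_step[OF step_focus_step[OF m i] IH(7) less.prems(2) IH(5) le] .
    ultimately show ?thesis using IH le by blast
  qed
qed

section \<open>Countermodels from failed proof search\<close>

lemma saturated_left: "saturated s \<Longrightarrow> \<phi> \<in> fst s \<Longrightarrow> decomposable \<phi> \<Longrightarrow> s \<in> set (left_premises \<phi> s)"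
  unfolding saturated_def expands_left_def by blast

lemma saturated_left_cases:
  assumes "saturated s"
  shows saturated_ImpL: "Imp f g \<in> fst s \<Longrightarrow> f \<in> snd s \<or> g \<in> fst s"
    and saturated_SeqL: "Box (Seq p q) f \<in> fst s \<Longrightarrow> Box p (Box q f) \<in> fst s"
    and saturated_ChoiceL: "Box (Choice p q) f \<in> fst s \<Longrightarrow> Box p f \<in> fst s \<and> Box q f \<in> fst s"
    and saturated_StarL: "Box (Star p) f \<in> fst s \<Longrightarrow> f \<in> fst s \<and> Box p (Box (Star p) f) \<in> fst s"
    and saturated_TestL: "Box (Test g) f \<in> fst s \<Longrightarrow> g \<in> snd s \<or> f \<in> fst s"
proof -
  obtain G D where s: "s = (G, D)" by (cases s)
  note sat = saturated_left[OF assms, unfolded s]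
  show "Imp f g \<in> fst s \<Longrightarrow> f \<in> snd s \<or> g \<in> fst s"
    unfolding s using sat[of "Imp f g"] by auto
  show "Box (Seq p q) f \<in> fst s \<Longrightarrow> Box p (Box q f) \<in> fst s"
    unfolding s using sat[of "Box (Seq p q) f"] by auto
  show "Box (Choice p q) f \<in> fst s \<Longrightarrow> Box p f \<in> fst s \<and> Box q f \<in> fst s"
    unfolding s using sat[of "Box (Choice p q) f"] by auto
  show "Box (Star p) f \<in> fst s \<Longrightarrow> f \<in> fst s \<and> Box p (Box (Star p) f) \<in> fst s"
    unfolding s using sat[of "Box (Star p) f"] by auto
  show "Box (Test g) f \<in> fst s \<Longrightarrow> g \<in> snd s \<or> f \<in> fst s"
    unfolding s using sat[of "Box (Test g) f"] by auto
qed

lemma rel_subset: "(\<forall>a. R a \<subseteq> W \<times> W) \<Longrightarrow> rel W R V \<pi> \<subseteq> W \<times> W"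
proof (induction \<pi>)
  case (Star p)
  then show ?case by (auto dest: trancl_mono[where s = "W \<times> W"] simp: trancl_subset_Sigma)
qed auto

lemma loop_step_refutes:
  assumes "loop_step s \<phi> \<phi>'" "w \<in> W" "\<forall>\<chi>\<in>side_formulas \<phi>. \<chi> \<in> fst s \<longrightarrow> sat W R V w \<chi>"
    "\<not> sat W R V w \<phi>'"
  shows "\<not> sat W R V w \<phi>"
proof -
  obtain k where k: "k < length (right_premises \<phi> s)" "right_premises \<phi> s ! k = s" "\<phi>' = right_component \<phi> k"
    and d: "decomposable \<phi>" using assms(1) unfolding loop_step_def by blast
  obtain G D where s: "s = (G, D)" by (cases s)
  show ?thesis using d
  proof (cases \<phi> rule: decomposable.cases)
    case (1 f g)
    then have "f \<in> G" "\<phi>' = g" using k s by (auto dest: sym)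
    then show ?thesis using assms(3,4) 1 s by auto
  next
    case ("3_3" p f)
    have "(x, y) \<in> rel W R V p \<Longrightarrow> (y, z) \<in> rel W R V (Star p) \<Longrightarrow> (x, z) \<in> rel W R V (Star p)" for x y z
      by (auto intro: trancl_into_trancl2 r_into_trancl)
    then show ?thesis using assms(2,4) k "3_3" by (cases "k = 0") auto
  next
    case ("3_4" g f)
    then have "g \<in> G" "\<phi>' = f" using k s by (auto dest: sym)
    then show ?thesis using assms(2-4) "3_4" s by auto
  qed (use assms(4) k in \<open>auto split: if_splits\<close>)
qed

definition can_rel :: "nat set \<Rightarrow> (nat \<Rightarrow> ('p,'a) sequent) \<Rightarrow> 'a \<Rightarrow> (nat \<times> nat) set" where
  "can_rel W Sq a = {(i, j). i \<in> W \<and> j \<in> W \<and> {\<chi>. Box (At a) \<chi> \<in> fst (Sq i)} \<subseteq> fst (Sq j)}"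

definition can_val :: "(nat \<Rightarrow> ('p,'a) sequent) \<Rightarrow> nat \<Rightarrow> 'p set" where
  "can_val Sq i = {p. Atom p \<in> fst (Sq i)}"

definition refute_step ::
  "nat set \<Rightarrow> (nat \<Rightarrow> ('p,'a) sequent) \<Rightarrow> nat \<times> ('p,'a) fm \<Rightarrow> nat \<times> ('p,'a) fm \<Rightarrow> bool" where
  "refute_step W Sq x y \<longleftrightarrow>
     (\<exists>i \<phi> \<phi>'. x = (i, \<phi>) \<and> y = (i, \<phi>') \<and> i \<in> W \<and> loop_step (Sq i) \<phi> \<phi>') \<or>
     (\<exists>i j a Y. x = (i, Box (At a) Y) \<and> y = (j, Y) \<and> i \<in> W \<and> j \<in> W \<and> Box (At a) Y \<in> snd (Sq i)
        \<and> {\<chi>. Box (At a) \<chi> \<in> fst (Sq i)} \<subseteq> fst (Sq j) \<and> Y \<in> snd (Sq j))"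

definition atomic :: "('p,'a) fm \<Rightarrow> bool" where
  "atomic \<phi> \<longleftrightarrow> \<phi> = Bot \<or> (\<exists>p. \<phi> = Atom p)"

locale canonical_model =
  fixes W :: "nat set" and Sq :: "nat \<Rightarrow> ('p,'a) sequent"
  assumes saturated_world: "\<And>i. i \<in> W \<Longrightarrow> \<not> is_axiom (Sq i) \<and> saturated (Sq i)"
    and refutation: "\<And>i \<phi>. i \<in> W \<Longrightarrow> \<phi> \<in> snd (Sq i) \<Longrightarrow>
      \<exists>j \<psi>. (refute_step W Sq)\<^sup>*\<^sup>* (i, \<phi>) (j, \<psi>) \<and> atomic \<psi> \<and> \<psi> \<in> snd (Sq j) \<and> j \<in> W"
begin

abbreviation R where "R \<equiv> can_rel W Sq"
abbreviation V where "V \<equiv> can_val Sq"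
abbreviation S where "S \<equiv> sat W R V"
abbreviation falsified where "falsified g \<equiv> \<forall>i\<in>W. g \<in> snd (Sq i) \<longrightarrow> \<not> S i g"

lemma can_rel_subset: "R a \<subseteq> W \<times> W"
  by (auto simp: can_rel_def)

lemma rel_in_worlds: "(i, j) \<in> rel W R V \<pi> \<Longrightarrow> i \<in> W \<and> j \<in> W"
  using rel_subset[of R W V \<pi>] can_rel_subset by blast

lemma refute_step_components: "refute_step W Sq (i, \<phi>) (j, \<phi>') \<Longrightarrow> \<phi>' \<in> components \<phi>"
  unfolding refute_step_def using loop_step_components by fastforce

lemma refute_step_refutes:
  assumes "refute_step W Sq (i, \<phi>) (j, \<phi>')" "\<forall>\<chi>\<in>side_formulas \<phi>. \<chi> \<in> fst (Sq i) \<longrightarrow> S i \<chi>" "\<not> S j \<phi>'"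
  shows "\<not> S i \<phi>"
  using assms(1) unfolding refute_step_def
proof (elim disjE exE conjE)
  fix i0 \<phi>0 \<phi>0' assume "(i, \<phi>) = (i0, \<phi>0)" "(j, \<phi>') = (i0, \<phi>0')" "i0 \<in> W" "loop_step (Sq i0) \<phi>0 \<phi>0'"
  then show ?thesis using loop_step_refutes[of "Sq i" \<phi> \<phi>' i W] assms(2,3) by auto
next
  fix i0 j0 a Y assume "(i, \<phi>) = (i0, Box (At a) Y)" "(j, \<phi>') = (j0, Y)" "i0 \<in> W" "j0 \<in> W"
    "{\<chi>. Box (At a) \<chi> \<in> fst (Sq i0)} \<subseteq> fst (Sq j0)"
  then show ?thesis using assms(3) by (auto simp: can_rel_def)
qed

lemma refute_steps_refute:
  assumes "(refute_step W Sq)\<^sup>*\<^sup>* (i, \<phi>) (j, \<psi>)" "\<phi> \<in> fl_closure \<phi>0"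
    "\<And>k \<chi> s. k \<in> W \<Longrightarrow> \<chi> \<in> fl_closure \<phi>0 \<Longrightarrow> s \<in> side_formulas \<chi> \<Longrightarrow> s \<in> fst (Sq k) \<Longrightarrow> S k s"
    "\<not> S j \<psi>"
  shows "\<not> S i \<phi>"
  using assms(1,2)
proof (induction rule: converse_rtranclp_induct2)
  case refl then show ?case using assms(4) by simp
next
  case (step i \<phi> k \<chi>)
  have "\<chi> \<in> fl_closure \<phi>0" using step(4) refute_step_components[OF step(1)] by (rule components_fl_closure)
  then have "\<not> S k \<chi>" using step by blast
  moreover have "i \<in> W" using step(1) unfolding refute_step_def by auto
  ultimately show ?case using refute_step_refutes[OF step(1)] assms(3) step(4) by blast
qed

lemma box_left_transfer:
  assumes "\<And>g. size g < size \<pi> \<Longrightarrow> falsified g"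
    "Box \<pi> \<psi> \<in> fst (Sq i)" "i \<in> W" "(i, j) \<in> rel W R V \<pi>"
  shows "\<psi> \<in> fst (Sq j)"
  using assms
proof (induction \<pi> arbitrary: \<psi> i j rule: prog.induct[of "\<lambda>_. True"])
  case (At a) then show ?case by (auto simp: can_rel_def)
next
  case (Seq p q)
  obtain k where k: "(i, k) \<in> rel W R V p" "(k, j) \<in> rel W R V q" using Seq.prems(4) by auto
  have Hp: "size g < size p \<Longrightarrow> falsified g" and Hq: "size g < size q \<Longrightarrow> falsified g" for g
    using Seq.prems(1) by auto
  have "Box p (Box q \<psi>) \<in> fst (Sq i)"
    using saturated_SeqL saturated_world Seq.prems(2,3) by blast
  then have "Box q \<psi> \<in> fst (Sq k)" using Seq.IH(1) Hp Seq.prems(3) k(1) by blast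
  then show ?case using Seq.IH(2) Hq rel_in_worlds[OF k(1)] k(2) by blast
next
  case (Choice p q)
  have "Box p \<psi> \<in> fst (Sq i)" "Box q \<psi> \<in> fst (Sq i)"
    using saturated_ChoiceL saturated_world Choice.prems(2,3) by blast+
  moreover have "size g < size p \<Longrightarrow> falsified g" "size g < size q \<Longrightarrow> falsified g" for g
    using Choice.prems(1) by auto
  moreover have "(i, j) \<in> rel W R V p \<or> (i, j) \<in> rel W R V q" using Choice.prems(4) by auto
  ultimately show ?case using Choice.IH Choice.prems(3) by blast
next
  case (Star p)
  have unfold: "\<psi> \<in> fst (Sq k) \<and> Box p (Box (Star p) \<psi>) \<in> fst (Sq k)"
    if "k \<in> W" "Box (Star p) \<psi> \<in> fst (Sq k)" for k
    using saturated_StarL saturated_world that by blast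
  have step: "Box (Star p) \<psi> \<in> fst (Sq z) \<and> z \<in> W"
    if "(y, z) \<in> rel W R V p" "y \<in> W" "Box (Star p) \<psi> \<in> fst (Sq y)" for y z
  proof -
    have "size g < size p \<Longrightarrow> falsified g" for g using Star.prems(1) by auto
    moreover have "Box p (Box (Star p) \<psi>) \<in> fst (Sq y)" using unfold that(2,3) by blast
    ultimately show ?thesis using Star.IH that(1,2) rel_in_worlds[OF that(1)] by blast
  qed
  consider "i = j" | "(i, j) \<in> (rel W R V p)\<^sup>+" using Star.prems(4) by auto
  then show ?case
  proof cases
    case 1 then show ?thesis using unfold Star.prems(2,3) by blast
  next
    case 2
    then have "Box (Star p) \<psi> \<in> fst (Sq j) \<and> j \<in> W"
      by (induction rule: trancl_induct) (use step Star.prems(2,3) in blast)+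
    then show ?thesis using unfold by blast
  qed
next
  case (Test g)
  have "g \<in> snd (Sq i) \<or> \<psi> \<in> fst (Sq i)" using saturated_TestL saturated_world Test.prems(2,3) by blast
  moreover have "i = j" "S i g" using Test.prems(4) by auto
  ultimately show ?case using Test.prems(1)[of g] Test.prems(3) by auto
qed simp_all

lemma truth_lemma: "(\<forall>i\<in>W. \<phi> \<in> fst (Sq i) \<longrightarrow> S i \<phi>) \<and> falsified \<phi>"
proof (induction "size \<phi>" arbitrary: \<phi> rule: less_induct)
  case less
  have left: "S i \<phi>" if i: "i \<in> W" "\<phi> \<in> fst (Sq i)" for i
  proof (cases \<phi>)
    case Bot then show ?thesis using saturated_world[OF i(1)] i by (auto simp: is_axiom_def)
  next
    case (Atom p) then show ?thesis using i by (simp add: can_val_def)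
  next
    case (Imp f g)
    then have "f \<in> snd (Sq i) \<or> g \<in> fst (Sq i)" using saturated_ImpL saturated_world i by blast
    then show ?thesis using less[of f] less[of g] Imp i by auto
  next
    case (Box \<pi> \<psi>)
    have "\<And>g. size g < size \<pi> \<Longrightarrow> falsified g" using less Box by auto
    then have "\<And>j. (i, j) \<in> rel W R V \<pi> \<Longrightarrow> \<psi> \<in> fst (Sq j) \<and> j \<in> W"
      using box_left_transfer i Box rel_in_worlds by blast
    then show ?thesis using less[of \<psi>] Box by auto
  qed
  have right: "\<not> S i \<phi>" if i: "i \<in> W" "\<phi> \<in> snd (Sq i)" for i
  proof -
    obtain j \<psi> where j: "(refute_step W Sq)\<^sup>*\<^sup>* (i, \<phi>) (j, \<psi>)" "atomic \<psi>" "\<psi> \<in> snd (Sq j)" "j \<in> W"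
      using refutation[OF i] by blast
    have "\<not> S j \<psi>" using j(2-4) saturated_world[OF j(4)] by (auto simp: atomic_def is_axiom_def can_val_def)
    moreover have "\<And>k \<chi> s. k \<in> W \<Longrightarrow> \<chi> \<in> fl_closure \<phi> \<Longrightarrow> s \<in> side_formulas \<chi> \<Longrightarrow> s \<in> fst (Sq k) \<Longrightarrow> S k s"
      using less side_formulas_fl_closure_less by blast
    ultimately show ?thesis using refute_steps_refute[OF j(1) fl_closure_self] by blast
  qed
  show ?case using left right by blast
qed

end

lemma not_decomposable_cases: "\<not> decomposable \<tau> \<Longrightarrow> atomic \<tau> \<or> (\<exists>a Y. \<tau> = Box (At a) Y)"
  by (cases \<tau> rule: decomposable.cases) (auto simp: atomic_def)

lemma loop_steps_in: "(loop_step s)\<^sup>*\<^sup>* \<sigma> \<sigma>' \<Longrightarrow> \<sigma> \<in> snd s \<Longrightarrow> \<sigma>' \<in> snd s"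
  by (induction rule: rtranclp_induct) (auto dest: loop_step_in)

text \<open>Worlds are enumerated by natural numbers because validity only quantifies over models
  with states in nat.\<close>

locale world_construction =
  fixes C :: "('p,'a) fm set"
  assumes finite_C: "finite C" and closed_C: "components_closed C"
begin

definition world_configs :: "(('p,'a) config \<times> ('p,'a) config list \<times> ('p,'a) config list) set" where
  "world_configs = {(c, H1, H2). \<not> derivable H1 H2 c \<and> phase c = 4 \<and> wf_config C c \<and> hist_inv C H1 H2}"

lemma finite_world_configs: "finite world_configs"
proof -
  let ?L = "{xs. set xs \<subseteq> configs C \<and> distinct xs}"
  have "world_configs \<subseteq> configs C \<times> ?L \<times> ?L"
    unfolding world_configs_def hist_inv_def configs_def by auto
  moreover have "finite (configs C \<times> ?L \<times> ?L)"
    using finite_configs[OF finite_C] finite_subset_distinct[OF finite_configs[OF finite_C]] by blast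
  ultimately show ?thesis by (rule finite_subset)
qed

definition world_list where "world_list = (SOME xs. set xs = world_configs \<and> distinct xs)"

lemma set_world_list: "set world_list = world_configs"
  unfolding world_list_def using someI_ex[OF finite_distinct_list[OF finite_world_configs]] by blast

definition worlds :: "nat set" where "worlds = {i. i < length world_list}"
definition wcfg :: "nat \<Rightarrow> ('p,'a) config" where "wcfg i = fst (world_list ! i)"
definition whist :: "nat \<Rightarrow> ('p,'a) config list" where "whist i = fst (snd (world_list ! i))"
definition wseq :: "nat \<Rightarrow> ('p,'a) sequent" where "wseq i = cseq (wcfg i)"

lemma world_configs_worlds: "x \<in> world_configs \<Longrightarrow> \<exists>i\<in>worlds. world_list ! i = x"
  using set_world_list unfolding worlds_def by (metis in_set_conv_nth mem_Collect_eq)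

lemma worlds_world_configs: "i \<in> worlds \<Longrightarrow> world_list ! i \<in> world_configs"
  using set_world_list unfolding worlds_def by (metis mem_Collect_eq nth_mem)

lemma world_phase_4: "i \<in> worlds \<Longrightarrow> phase (wcfg i) = 4"
  using worlds_world_configs unfolding world_configs_def wcfg_def by fastforce

lemma world_wf_config: "i \<in> worlds \<Longrightarrow> wf_config C (wcfg i)"
  using worlds_world_configs unfolding world_configs_def wcfg_def by fastforce

lemma world_whist_length: "i \<in> worlds \<Longrightarrow> length (whist i) \<le> card (configs C)"
  using worlds_world_configs hist_inv_length[OF finite_C] unfolding world_configs_def whist_def by fastforce

lemma loop_steps_refute_steps:
  assumes "(loop_step (wseq j))\<^sup>*\<^sup>* Y \<tau>" "j \<in> worlds"
  shows "(refute_step worlds wseq)\<^sup>*\<^sup>* (j, Y) (j, \<tau>)"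
  using assms(1)
proof (induction rule: rtranclp_induct)
  case (step y z)
  have "refute_step worlds wseq (j, y) (j, z)" unfolding refute_step_def using step(2) assms(2) by simp
  with step(3) show ?case by (rule rtranclp.rtrancl_into_rtrancl)
qed simp

lemma modal_successor:
  assumes i: "i \<in> worlds" and b: "Box (At a) Y \<in> snd (wseq i)"
  obtains j \<tau> where "j \<in> worlds" "refute_step worlds wseq (i, Box (At a) Y) (j, Y)"
    "focus (wcfg j) = Some \<tau>" "(loop_step (wseq j))\<^sup>*\<^sup>* Y \<tau>"
    "focus (wcfg i) = Some (Box (At a) Y) \<Longrightarrow> length (whist i) < length (whist j)"
proof -
  obtain c H1 H2 where wi: "world_list ! i = (c, H1, H2)" by (cases "world_list ! i") auto
  have W: "\<not> derivable H1 H2 c" "phase c = 4" "wf_config C c" "hist_inv C H1 H2"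
    using worlds_world_configs[OF i] wi unfolding world_configs_def by auto
  have bc: "Box (At a) Y \<in> snd (cseq c)" using b wi by (simp add: wseq_def wcfg_def)
  define child where "child = modal_child c a Y"
  define H1c where "H1c = upd_focus_hist c (RK (At a) Y) 0 child c H1"
  have "\<not> derivable H1c [] child" using W(1) derivable_modal[OF W(2) bc] unfolding H1c_def child_def by blast
  moreover have "wf_config C child" unfolding child_def by (rule wf_config_modal_child[OF closed_C W(3) bc])
  moreover have "c \<notin> set H1" using W(1) derivable_focus_bud by blast
  then have "hist_inv C H1c []"
    using W(3,4)
    unfolding H1c_def hist_inv_def upd_focus_hist_def configs_def by auto
  ultimately obtain c' H1' H2' where P: "\<not> derivable H1' H2' c'" "phase c' = 4" "wf_config C c'"
      "hist_inv C H1' H2'" "cseq child \<le> cseq c'" "\<exists>H. H1' = H @ H1c" "focus_reaches child c'"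
    using search_reaches_world[OF finite_C closed_C] by blast
  obtain j where j: "j \<in> worlds" "world_list ! j = (c', H1', H2')"
    using world_configs_worlds[of "(c', H1', H2')"] P(1-4) unfolding world_configs_def by auto
  have "refute_step worlds wseq (i, Box (At a) Y) (j, Y)"
    using P(5) i j b unfolding refute_step_def child_def modal_child_def
    by (auto simp: wseq_def wcfg_def wi less_eq_prod_def)
  moreover have "\<exists>\<tau>. focus c' = Some \<tau> \<and> (loop_step (cseq c'))\<^sup>*\<^sup>* Y \<tau>"
    using P(7) unfolding focus_reaches_def child_def modal_child_def by auto
  moreover have "length H1 < length H1'" if "focus c = Some (Box (At a) Y)"
  proof -
    have "H1c = c # H1"
      using that W(2) unfolding H1c_def upd_focus_hist_def child_def modal_child_def follows_def records_focus_def
      by auto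
    then show ?thesis using P(6) by auto
  qed
  ultimately show ?thesis using that j wi by (auto simp: wseq_def wcfg_def whist_def)
qed

lemma focus_refuted:
  "i \<in> worlds \<Longrightarrow> focus (wcfg i) = Some \<tau> \<Longrightarrow>
   \<exists>j \<psi>. (refute_step worlds wseq)\<^sup>*\<^sup>* (i, \<tau>) (j, \<psi>) \<and> atomic \<psi> \<and> \<psi> \<in> snd (wseq j) \<and> j \<in> worlds"
proof (induction "card (configs C) - length (whist i)" arbitrary: i \<tau> rule: less_induct)
  case less
  have \<tau>: "\<tau> \<in> snd (wseq i)" "\<not> decomposable \<tau>"
    using world_wf_config[OF less.prems(1)] world_phase_4[OF less.prems(1)] less.prems(2)
    by (auto simp: wf_config_def phase_4_iff wseq_def)
  consider "atomic \<tau>" | a Y where "\<tau> = Box (At a) Y" using not_decomposable_cases[OF \<tau>(2)] by blast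
  then show ?case
  proof cases
    case 1 then show ?thesis using \<tau>(1) less.prems(1) by blast
  next
    case 2
    obtain j \<tau>' where j: "j \<in> worlds" "refute_step worlds wseq (i, Box (At a) Y) (j, Y)"
        "focus (wcfg j) = Some \<tau>'" "(loop_step (wseq j))\<^sup>*\<^sup>* Y \<tau>'" "length (whist i) < length (whist j)"
      using modal_successor[OF less.prems(1)] \<tau>(1) less.prems(2) 2 by metis
    have "card (configs C) - length (whist j) < card (configs C) - length (whist i)"
      using j(5) world_whist_length[OF j(1)] by linarith
    then obtain k \<psi> where k: "(refute_step worlds wseq)\<^sup>*\<^sup>* (j, \<tau>') (k, \<psi>)"
        "atomic \<psi>" "\<psi> \<in> snd (wseq k)" "k \<in> worlds"
      using less.hyps j(1,3) by blast
    have "(refute_step worlds wseq)\<^sup>*\<^sup>* (i, \<tau>) (k, \<psi>)"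
      using j(2) 2 rtranclp_trans[OF loop_steps_refute_steps[OF j(4,1)] k(1)]
      by (simp add: converse_rtranclp_into_rtranclp)
    then show ?thesis using k by blast
  qed
qed

lemma refutation:
  assumes i: "i \<in> worlds" and \<phi>: "\<phi> \<in> snd (wseq i)"
  shows "\<exists>j \<psi>. (refute_step worlds wseq)\<^sup>*\<^sup>* (i, \<phi>) (j, \<psi>) \<and> atomic \<psi> \<and> \<psi> \<in> snd (wseq j) \<and> j \<in> worlds"
proof -
  have "\<not> trapped (wseq i) \<phi>" using world_phase_4[OF i] by (auto simp: phase_4_iff wseq_def)
  then obtain \<phi>' where \<phi>': "(loop_step (wseq i))\<^sup>*\<^sup>* \<phi> \<phi>'" "\<not> decomposable \<phi>'"
    using \<phi> unfolding trapped_def escapes_def by blast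
  have steps: "(refute_step worlds wseq)\<^sup>*\<^sup>* (i, \<phi>) (i, \<phi>')" by (rule loop_steps_refute_steps[OF \<phi>'(1) i])
  have \<phi>'_in: "\<phi>' \<in> snd (wseq i)" by (rule loop_steps_in[OF \<phi>'(1) \<phi>])
  consider "atomic \<phi>'" | a Y where "\<phi>' = Box (At a) Y" using not_decomposable_cases[OF \<phi>'(2)] by blast
  then show ?thesis
  proof cases
    case 1 then show ?thesis using steps \<phi>'_in i by blast
  next
    case 2
    obtain j \<tau> where j: "j \<in> worlds" "refute_step worlds wseq (i, Box (At a) Y) (j, Y)"
        "focus (wcfg j) = Some \<tau>" "(loop_step (wseq j))\<^sup>*\<^sup>* Y \<tau>"
      using modal_successor[OF i] \<phi>'_in 2 by metis
    obtain k \<psi> where k: "(refute_step worlds wseq)\<^sup>*\<^sup>* (j, \<tau>) (k, \<psi>)"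
        "atomic \<psi>" "\<psi> \<in> snd (wseq k)" "k \<in> worlds"
      using focus_refuted[OF j(1,3)] by blast
    have "(refute_step worlds wseq)\<^sup>*\<^sup>* (i, \<phi>') (k, \<psi>)"
      using j(2) 2 rtranclp_trans[OF loop_steps_refute_steps[OF j(4,1)] k(1)]
      by (simp add: converse_rtranclp_into_rtranclp)
    then show ?thesis using steps k by (meson rtranclp_trans)
  qed
qed

sublocale canonical_model worlds wseq
proof
  fix i assume "i \<in> worlds"
  then show "\<not> is_axiom (wseq i) \<and> saturated (wseq i)"
    using world_phase_4 by (auto simp: phase_4_iff wseq_def)
qed (rule refutation)

lemma countermodel:
  assumes "\<not> derivable [] [] ((G, D), None, None)" "G \<subseteq> C" "D \<subseteq> C"
  shows "\<not> valid G D"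
proof -
  have "wf_config C ((G, D), None, None)" using assms(2,3) unfolding wf_config_def by simp
  moreover have "hist_inv C [] []" unfolding hist_inv_def by simp
  ultimately obtain c H1 H2 where c: "\<not> derivable H1 H2 c" "phase c = 4" "wf_config C c" "hist_inv C H1 H2"
      "(G, D) \<le> cseq c"
    using search_reaches_world[OF finite_C closed_C assms(1)] by fastforce
  then obtain i where i: "i \<in> worlds" "world_list ! i = (c, H1, H2)"
    using world_configs_worlds unfolding world_configs_def by blast
  have GD: "G \<subseteq> fst (wseq i)" "D \<subseteq> snd (wseq i)"
    using c(5) i(2) by (auto simp: wseq_def wcfg_def less_eq_prod_def)
  have "is_model worlds R V" using i(1) can_rel_subset unfolding is_model_def by blast
  moreover have "\<forall>f\<in>G. S i f" "\<not> (\<exists>g\<in>D. S i g)" using truth_lemma GD i(1) by blast+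
  ultimately show ?thesis using i(1) unfolding valid_def valid_in_def by blast
qed

end

section \<open>From derivability to cyclic proofs\<close>

text \<open>A bud PBud c q b refers to its companion at position q; b tells whether it was
  closed through the focus history.\<close>

datatype ('p,'a) ptree =
    PNode "('p,'a) config" "('p,'a) rule" "('p,'a) ptree list"
  | PBud "('p,'a) config" "nat list" bool

fun root_config :: "('p,'a) ptree \<Rightarrow> ('p,'a) config" where
  "root_config (PNode c r ts) = c"
| "root_config (PBud c q b) = c"

fun children :: "('p,'a) ptree \<Rightarrow> ('p,'a) ptree list" where
  "children (PNode c r ts) = ts"
| "children (PBud c q b) = []"

fun root_rule :: "('p,'a) ptree \<Rightarrow> ('p,'a) rule" where
  "root_rule (PNode c r ts) = r"
| "root_rule (PBud c q b) = RAx"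

text \<open>Positions are paths from the root written in reverse, so that the position of the
  i-th child of the node at p is i # p.\<close>

inductive derivation_tree ::
  "(('p,'a) config \<times> nat list) list \<Rightarrow> (('p,'a) config \<times> nat list) list \<Rightarrow> nat list
   \<Rightarrow> ('p,'a) config \<Rightarrow> ('p,'a) ptree \<Rightarrow> bool" where
  tree_axiom: "next_move c = MAx r \<Longrightarrow> derivation_tree H1 H2 p c (PNode c r [])"
| tree_focus_bud: "(c, q) \<in> set H1 \<Longrightarrow> derivation_tree H1 H2 p c (PBud c q True)"
| tree_loop_bud: "(c, q) \<in> set H2 \<Longrightarrow> derivation_tree H1 H2 p c (PBud c q False)"
| tree_step: "next_move c = MStep r cs \<Longrightarrow> length ts = length cs \<Longrightarrow>
    \<forall>i<length cs. derivation_tree (upd_focus_hist c r i (cs!i) (c, p) H1)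
                   (upd_loop_hist c r i (cs!i) (c, p) H2) (i # p) (cs!i) (ts!i)
    \<Longrightarrow> derivation_tree H1 H2 p c (PNode c r ts)"
| tree_modal: "phase c = 4 \<Longrightarrow> Box (At a) Y \<in> snd (cseq c) \<Longrightarrow>
    derivation_tree (upd_focus_hist c (RK (At a) Y) 0 (modal_child c a Y) (c, p) H1) [] (0 # p)
      (modal_child c a Y) t
    \<Longrightarrow> derivation_tree H1 H2 p c (PNode c (RK (At a) Y) [t])"

lemma derivation_tree_root_config: "derivation_tree H1 H2 p c t \<Longrightarrow> root_config t = c"
  by (induction rule: derivation_tree.induct) auto

lemma map_fst_upd_focus_hist:
  "map fst (upd_focus_hist c r i c' (c, p) H) = upd_focus_hist c r i c' c (map fst H)"
  unfolding upd_focus_hist_def by auto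

lemma map_fst_upd_loop_hist:
  "map fst (upd_loop_hist c r i c' (c, p) H) = upd_loop_hist c r i c' c (map fst H)"
  unfolding upd_loop_hist_def by auto

lemma derivable_derivation_tree:
  "derivable H1 H2 c \<Longrightarrow> map fst HP1 = H1 \<Longrightarrow> map fst HP2 = H2 \<Longrightarrow> \<exists>t. derivation_tree HP1 HP2 p c t"
proof (induction arbitrary: HP1 HP2 p rule: derivable.induct)
  case (derivable_axiom c H1 H2)
  then show ?case using next_move_phase_0 tree_axiom by blast
next
  case (derivable_focus_bud c H1 H2)
  then obtain q where "(c, q) \<in> set HP1" by force
  then show ?case using tree_focus_bud by blast
next
  case (derivable_loop_bud c H2 H1)
  then obtain q where "(c, q) \<in> set HP2" by force
  then show ?case using tree_loop_bud by blast
next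
  case (derivable_step c r cs H1 H2)
  have "\<forall>i. \<exists>t. i < length cs \<longrightarrow>
      derivation_tree (upd_focus_hist c r i (cs!i) (c, p) HP1) (upd_loop_hist c r i (cs!i) (c, p) HP2)
        (i # p) (cs!i) t"
    using derivable_step(2,3,4) map_fst_upd_focus_hist map_fst_upd_loop_hist by metis
  then obtain F where "\<forall>i. i < length cs \<longrightarrow>
      derivation_tree (upd_focus_hist c r i (cs!i) (c, p) HP1) (upd_loop_hist c r i (cs!i) (c, p) HP2)
        (i # p) (cs!i) (F i)"
    by metis
  then have "derivation_tree HP1 HP2 p c (PNode c r (map F [0..<length cs]))"
    by (intro tree_step[OF derivable_step(1)]) auto
  then show ?case by blast
next
  case (derivable_modal c a Y H1 H2)
  obtain t where "derivation_tree (upd_focus_hist c (RK (At a) Y) 0 (modal_child c a Y) (c, p) HP1) [] (0 # p)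
      (modal_child c a Y) t"
    using derivable_modal(4,5) map_fst_upd_focus_hist by (metis list.map(1))
  then show ?case using tree_modal[OF derivable_modal(1,2)] by blast
qed

lemma derivation_tree_PNode_cases:
  assumes "derivation_tree H1 H2 p c (PNode c' r ts)"
  obtains (axiom) "c' = c" "next_move c = MAx r" "ts = []"
  | (step) cs where "c' = c" "next_move c = MStep r cs" "length ts = length cs"
      "\<forall>i<length cs. derivation_tree (upd_focus_hist c r i (cs!i) (c, p) H1)
         (upd_loop_hist c r i (cs!i) (c, p) H2) (i # p) (cs!i) (ts!i)"
  | (modal) a Y t where "c' = c" "phase c = 4" "Box (At a) Y \<in> snd (cseq c)" "r = RK (At a) Y" "ts = [t]"
      "derivation_tree (upd_focus_hist c (RK (At a) Y) 0 (modal_child c a Y) (c, p) H1) [] (0 # p)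
         (modal_child c a Y) t"
  using assms by (cases rule: derivation_tree.cases) auto

lemma derivation_tree_PBud_cases:
  "derivation_tree H1 H2 p c (PBud c' q b) \<Longrightarrow>
   c' = c \<and> (b \<longrightarrow> (c, q) \<in> set H1) \<and> (\<not> b \<longrightarrow> (c, q) \<in> set H2)"
  by (cases rule: derivation_tree.cases) auto

fun subtree :: "('p,'a) ptree \<Rightarrow> nat list \<Rightarrow> ('p,'a) ptree option" where
  "subtree t [] = Some t"
| "subtree t (i # p) = (case subtree t p of
     Some (PNode c r ts) \<Rightarrow> if i < length ts then Some (ts ! i) else None
   | _ \<Rightarrow> None)"

lemma subtree_append:
  "subtree t (p @ [i]) =
     (case t of PNode c r ts \<Rightarrow> if i < length ts then subtree (ts ! i) p else None | _ \<Rightarrow> None)"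
  by (induction p) (auto split: ptree.splits option.splits)

lemma subtree_Cons:
  "subtree t (i # p) = Some s \<Longrightarrow> \<exists>c r ts. subtree t p = Some (PNode c r ts) \<and> i < length ts \<and> ts ! i = s"
  by (auto split: option.splits ptree.splits if_splits)

definition positions :: "('p,'a) ptree \<Rightarrow> nat list set" where
  "positions t = {p. subtree t p \<noteq> None}"

lemma finite_positions: "finite (positions t)"
proof (induction t)
  case (PNode c r ts)
  have "positions (PNode c r ts) = insert [] (\<Union>i<length ts. (\<lambda>p. p @ [i]) ` positions (ts ! i))"
    by (rule set_eqI, case_tac x rule: rev_cases) (auto simp: positions_def subtree_append)
  then show ?case using PNode by simp
next
  case (PBud c q b)
  have "positions (PBud c q b) = {[]}"
    by (rule set_eqI, case_tac x rule: rev_cases) (auto simp: positions_def subtree_append)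
  then show ?case by simp
qed

inductive path_along :: "(nat list \<Rightarrow> nat \<Rightarrow> bool) \<Rightarrow> nat list \<Rightarrow> nat list \<Rightarrow> bool" for e where
  path_refl: "path_along e q q"
| path_Cons: "path_along e q p \<Longrightarrow> e p i \<Longrightarrow> path_along e q (i # p)"

lemma path_along_suffix: "path_along e q p \<Longrightarrow> \<exists>xs. p = xs @ q"
  by (induction rule: path_along.induct) (auto intro: exI[of _ "_ # _"])

lemma path_along_length: "path_along e q p \<Longrightarrow> length q \<le> length p"
  using path_along_suffix by fastforce

lemma path_along_mono: "path_along e q p \<Longrightarrow> (\<And>p i. e p i \<Longrightarrow> e' p i) \<Longrightarrow> path_along e' q p"
  by (induction rule: path_along.induct) (auto intro: path_along.intros)

lemma path_along_ConsD: "path_along e q (i # p) \<Longrightarrow> q \<noteq> i # p \<Longrightarrow> e p i \<and> path_along e q p"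
  by (erule path_along.cases) auto

definition focus_edge :: "('p,'a) ptree \<Rightarrow> nat list \<Rightarrow> nat \<Rightarrow> bool" where
  "focus_edge T p i \<longleftrightarrow>
     (\<exists>c r ts. subtree T p = Some (PNode c r ts) \<and> i < length ts \<and> focus_follows c r i (root_config (ts!i)))"

definition loop_edge :: "('p,'a) ptree \<Rightarrow> nat list \<Rightarrow> nat \<Rightarrow> bool" where
  "loop_edge T p i \<longleftrightarrow>
     (\<exists>c r ts. subtree T p = Some (PNode c r ts) \<and> i < length ts \<and> focus_follows c r i (root_config (ts!i))
        \<and> loop_follows c r i (root_config (ts!i)))"

lemma loop_edge_focus_edge: "loop_edge T p i \<Longrightarrow> focus_edge T p i"
  unfolding focus_edge_def loop_edge_def by blast

definition hist_ok ::
  "('p,'a) ptree \<Rightarrow> (nat list \<Rightarrow> nat \<Rightarrow> bool) \<Rightarrow> (('p,'a) config \<Rightarrow> bool) \<Rightarrow> nat list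
   \<Rightarrow> (('p,'a) config \<times> nat list) list \<Rightarrow> bool" where
  "hist_ok T e R p H \<longleftrightarrow>
     (\<forall>(c, q)\<in>set H. q \<noteq> p \<and> path_along e q p \<and> (\<exists>r ts. subtree T q = Some (PNode c r ts)) \<and> R c)"

lemma hist_okD:
  "hist_ok T e R p H \<Longrightarrow> (c, q) \<in> set H \<Longrightarrow>
   q \<noteq> p \<and> path_along e q p \<and> (\<exists>r ts. subtree T q = Some (PNode c r ts)) \<and> R c"
  unfolding hist_ok_def by fastforce

lemma hist_ok_Nil [simp]: "hist_ok T e R p []"
  unfolding hist_ok_def by simp

lemma hist_ok_step:
  assumes h: "hist_ok T e R p H" and s: "subtree T p = Some (PNode c r ts)" and e: "b \<Longrightarrow> e p i"
  shows "hist_ok T e R (i # p) (if b then (if R c then (c, p) # H else H) else [])"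
proof (cases b)
  case True
  have "q \<noteq> i # p \<and> path_along e q (i # p)" if "path_along e q p" for q
    using path_along_length[OF that] path_Cons[OF that e[OF True]] by auto
  then show ?thesis using h s path_Cons[OF path_refl[of e p] e[OF True]] True unfolding hist_ok_def by auto
qed simp

definition hist_valid ::
  "('p,'a) ptree \<Rightarrow> nat list \<Rightarrow> (('p,'a) config \<times> nat list) list \<Rightarrow> (('p,'a) config \<times> nat list) list \<Rightarrow> bool" where
  "hist_valid T p H1 H2 \<longleftrightarrow>
     hist_ok T (focus_edge T) records_focus p H1 \<and> hist_ok T (loop_edge T) records_loop p H2"

lemma hist_valid_step:
  assumes "hist_valid T p H1 H2" "subtree T p = Some (PNode c r ts)" "i < length ts" "root_config (ts!i) = c'"
  shows "hist_ok T (focus_edge T) records_focus (i # p) (upd_focus_hist c r i c' (c, p) H1)"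
    and "hist_ok T (loop_edge T) records_loop (i # p) (upd_loop_hist c r i c' (c, p) H2)"
proof -
  have h: "hist_ok T (focus_edge T) records_focus p H1" "hist_ok T (loop_edge T) records_loop p H2"
    using assms(1) by (simp_all add: hist_valid_def)
  have e: "focus_follows c r i c' \<Longrightarrow> focus_edge T p i"
    "focus_follows c r i c' \<and> loop_follows c r i c' \<Longrightarrow> loop_edge T p i"
    using assms(2-4) unfolding focus_edge_def loop_edge_def by blast+
  show "hist_ok T (focus_edge T) records_focus (i # p) (upd_focus_hist c r i c' (c, p) H1)"
    unfolding upd_focus_hist_def using h(1) e(1) by (rule hist_ok_step[OF _ assms(2)])
  show "hist_ok T (loop_edge T) records_loop (i # p) (upd_loop_hist c r i c' (c, p) H2)"
    unfolding upd_loop_hist_def using h(2) e(2) by (rule hist_ok_step[OF _ assms(2)])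
qed

locale tree_preproof =
  fixes C :: "('p,'a) fm set" and c0 :: "('p,'a) config" and T :: "('p,'a) ptree"
  assumes finite_C: "finite C" and closed_C: "components_closed C" and wf_c0: "wf_config C c0"
    and tree_T: "derivation_tree [] [] [] c0 T"
begin

lemma subtree_invariant:
  "subtree T p = Some s \<Longrightarrow>
   \<exists>H1 H2. derivation_tree H1 H2 p (root_config s) s \<and> hist_valid T p H1 H2 \<and> wf_config C (root_config s)"
proof (induction p arbitrary: s)
  case Nil
  then have "s = T" by simp
  then show ?case using tree_T derivation_tree_root_config[OF tree_T] wf_c0
    by (intro exI[of _ "[]"]) (auto simp: hist_valid_def)
next
  case (Cons i p)
  obtain c r ts where s: "subtree T p = Some (PNode c r ts)" "i < length ts" "ts ! i = s"
    using subtree_Cons[OF Cons.prems] by blast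
  obtain H1 H2 where IH: "derivation_tree H1 H2 p c (PNode c r ts)" "hist_valid T p H1 H2" "wf_config C c"
    using Cons.IH[OF s(1)] by auto
  show ?case using IH(1)
  proof (cases rule: derivation_tree_PNode_cases)
    case axiom then show ?thesis using s by simp
  next
    case (step cs)
    let ?H1 = "upd_focus_hist c r i (cs!i) (c, p) H1" and ?H2 = "upd_loop_hist c r i (cs!i) (c, p) H2"
    have t: "derivation_tree ?H1 ?H2 (i # p) (cs!i) s" using step s by auto
    have rc: "root_config s = cs ! i" using derivation_tree_root_config[OF t] .
    have "wf_config C (root_config s)"
      using step_wf_config[OF closed_C IH(3) step(2)] s(2) step(3) rc by simp
    moreover have "hist_valid T (i # p) ?H1 ?H2"
      using hist_valid_step[OF IH(2) s(1,2)] s(3) rc unfolding hist_valid_def by simp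
    moreover have "derivation_tree ?H1 ?H2 (i # p) (root_config s) s" using t rc by simp
    ultimately show ?thesis by blast
  next
    case (modal a Y t)
    let ?H1 = "upd_focus_hist c (RK (At a) Y) 0 (modal_child c a Y) (c, p) H1"
    have i0: "i = 0" "s = t" using s modal(5) by auto
    have rc: "root_config s = modal_child c a Y" using derivation_tree_root_config[OF modal(6)] i0 by simp
    have "wf_config C (root_config s)" using wf_config_modal_child[OF closed_C IH(3) modal(3)] rc by simp
    moreover have "hist_valid T (i # p) ?H1 []"
      using hist_valid_step(1)[OF IH(2) s(1,2)] s(3) i0 modal(4) rc by (simp add: hist_valid_def)
    moreover have "derivation_tree ?H1 [] (i # p) (root_config s) s" using modal(6) i0 rc by simp
    ultimately show ?thesis by blast
  qed
qed

end

context tree_preproof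
begin

lemma subtree_PNode_cases:
  assumes "subtree T p = Some (PNode c r ts)"
  obtains (axiom) "next_move c = MAx r" "ts = []"
  | (step) cs where "next_move c = MStep r cs" "map root_config ts = cs"
  | (modal) a Y t where "phase c = 4" "Box (At a) Y \<in> snd (cseq c)" "r = RK (At a) Y" "ts = [t]"
      "root_config t = modal_child c a Y"
proof -
  obtain H1 H2 where "derivation_tree H1 H2 p c (PNode c r ts)"
    using subtree_invariant[OF assms] by auto
  then show thesis
  proof (cases rule: derivation_tree_PNode_cases)
    case (step cs)
    have "root_config (ts!i) = cs!i" if "i < length ts" for i
      using derivation_tree_root_config[OF step(4)[rule_format]] step(3) that by simp
    then have "map root_config ts = cs" using step(3) by (auto intro: nth_equalityI)
    then show thesis using step that(2) by blast
  qed (use that derivation_tree_root_config in blast)+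
qed

lemma subtree_PNode:
  assumes "subtree T p = Some (PNode c r ts)"
  shows "wf_config C c" "rinst r (map (cseq \<circ> root_config) ts) (cseq c)" "\<forall>f. r \<noteq> RCut f" "length ts \<le> 2"
proof -
  show w: "wf_config C c" using subtree_invariant[OF assms] by auto
  have "rinst r (map (cseq \<circ> root_config) ts) (cseq c) \<and> (\<forall>f. r \<noteq> RCut f) \<and> length ts \<le> 2"
    using assms
  proof (cases rule: subtree_PNode_cases)
    case axiom then show ?thesis using next_move_MAx by fastforce
  next
    case (step cs)
    then show ?thesis using step_rinst[OF step(1)] w by (auto simp: wf_config_def comp_def)
  next
    case (modal a Y t)
    then show ?thesis using rinst_modal_child[OF modal(2)] by auto
  qed
  then show "rinst r (map (cseq \<circ> root_config) ts) (cseq c)" "\<forall>f. r \<noteq> RCut f" "length ts \<le> 2"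
    by auto
qed

lemma subtree_PNode_Nil:
  assumes "subtree T p = Some (PNode c r [])"
  shows "phase c = 0"
  using assms
proof (cases rule: subtree_PNode_cases)
  case axiom then show ?thesis using next_move_MAx by blast
next
  case (step cs)
  have "set_option (focus c) \<subseteq> snd (cseq c)" using subtree_PNode(1)[OF assms] by (simp add: wf_config_def)
  then show ?thesis using step_rinst[OF step(1)] step(2) by simp
qed simp

lemma subtree_PBud:
  assumes "subtree T p = Some (PBud c q b)"
  shows "q \<noteq> p \<and> (\<exists>r ts. subtree T q = Some (PNode c r ts) \<and> ts \<noteq> []) \<and>
    (b \<longrightarrow> path_along (focus_edge T) q p \<and> records_focus c) \<and>
    (\<not> b \<longrightarrow> path_along (loop_edge T) q p \<and> records_loop c)"
proof -
  obtain H1 H2 where t: "derivation_tree H1 H2 p c (PBud c q b)" and h: "hist_valid T p H1 H2"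
    using subtree_invariant[OF assms] by auto
  have mem: "(b \<longrightarrow> (c, q) \<in> set H1) \<and> (\<not> b \<longrightarrow> (c, q) \<in> set H2)"
    using derivation_tree_PBud_cases[OF t] by blast
  have A: "q \<noteq> p \<and> (\<exists>r ts. subtree T q = Some (PNode c r ts)) \<and>
      (b \<longrightarrow> path_along (focus_edge T) q p \<and> records_focus c) \<and>
      (\<not> b \<longrightarrow> path_along (loop_edge T) q p \<and> records_loop c)"
  proof (cases b)
    case True
    then show ?thesis using hist_okD[of T "focus_edge T" records_focus p H1 c q] h mem
      unfolding hist_valid_def by simp
  next
    case False
    then show ?thesis using hist_okD[of T "loop_edge T" records_loop p H2 c q] h mem
      unfolding hist_valid_def by simp
  qed
  then obtain r ts where q: "subtree T q = Some (PNode c r ts)" by blast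
  have "phase c \<noteq> 0"
  proof
    assume "phase c = 0"
    then show False using A unfolding records_focus_def records_loop_def by (cases b) simp_all
  qed
  then have "ts \<noteq> []" using subtree_PNode_Nil[of q c r] q by auto
  then show ?thesis using A q by blast
qed

lemma records_focus_child:
  assumes "subtree T q = Some (PNode c r ts)" "records_focus c" "i < length ts"
    "focus_follows c r i (root_config (ts!i))"
  shows "focus (root_config (ts!i)) \<noteq> focus c"
  using assms(1)
proof (cases rule: subtree_PNode_cases)
  case (step cs)
  show ?thesis using records_focus_step[OF assms(2) step(1), of i] assms(3) step(2)[symmetric] by simp
next
  case (modal a Y t)
  then show ?thesis using records_focus_modal_child[OF assms(2), of a Y] assms(3,4) by simp
qed (use assms(3) in simp)

lemma records_loop_child:
  assumes "subtree T q = Some (PNode c r ts)" "records_loop c" "i < length ts"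
    "loop_follows c r i (root_config (ts!i))"
  shows "loop_focus (root_config (ts!i)) \<noteq> loop_focus c"
  using assms(1)
proof (cases rule: subtree_PNode_cases)
  case (step cs)
  show ?thesis using records_loop_step[OF assms(2) step(1), of i] assms(3,4) step(2)[symmetric] by simp
next
  case modal
  then show ?thesis using assms(2) by (simp add: records_loop_def)
qed (use assms(3) in simp)

definition tree_pp :: "('p,'a) preproof" where
  "tree_pp = \<lparr>nodes = to_nat ` positions T, root = to_nat ([] :: nat list),
     lab = (\<lambda>n. cseq (root_config (the (subtree T (from_nat n))))),
     kind = (\<lambda>n. case the (subtree T (from_nat n)) of
                PNode c r ts \<Rightarrow> Inner r (map (\<lambda>i. to_nat (i # (from_nat n :: nat list))) [0..<length ts])
              | PBud c q b \<Rightarrow> Bud (to_nat q))\<rparr>"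

lemma nodes_tree_pp: "nodes tree_pp = to_nat ` positions T"
  and root_tree_pp: "root tree_pp = to_nat ([] :: nat list)"
  unfolding tree_pp_def by simp_all

lemma kind_tree_pp_PNode:
  "subtree T p = Some (PNode c r ts) \<Longrightarrow>
   kind tree_pp (to_nat p) = Inner r (map (\<lambda>i. to_nat (i # p)) [0..<length ts])"
  unfolding tree_pp_def by simp

lemma kind_tree_pp_PBud: "subtree T p = Some (PBud c q b) \<Longrightarrow> kind tree_pp (to_nat p) = Bud (to_nat q)"
  unfolding tree_pp_def by simp

lemma lab_tree_pp: "subtree T p = Some s \<Longrightarrow> lab tree_pp (to_nat p) = cseq (root_config s)"
  unfolding tree_pp_def by simp

lemma nodes_tree_ppE:
  assumes "n \<in> nodes tree_pp"
  obtains p s where "n = to_nat p" "subtree T p = Some s"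
  using assms unfolding tree_pp_def positions_def by auto

lemma tree_pp_children:
  assumes "n \<in> nodes tree_pp" "kind tree_pp n = Inner r cs"
  obtains p c ts where "n = to_nat p" "subtree T p = Some (PNode c r ts)"
    "cs = map (\<lambda>i. to_nat (i # p)) [0..<length ts]"
proof -
  obtain p s where ps: "n = to_nat p" "subtree T p = Some s" using nodes_tree_ppE[OF assms(1)] .
  have "\<exists>c ts. s = PNode c r ts" using assms(2) ps
    by (cases s) (auto simp: kind_tree_pp_PNode kind_tree_pp_PBud)
  then obtain c ts where s: "s = PNode c r ts" by blast
  show thesis
  proof (rule that[of p c ts])
    show "cs = map (\<lambda>i. to_nat (i # p)) [0..<length ts]"
      using assms(2) ps kind_tree_pp_PNode[of p c r ts] s by simp
  qed (use ps s in simp_all)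
qed

lemma is_preproof_tree_pp: "is_preproof tree_pp"
  unfolding is_preproof_def
proof (intro conjI ballI allI impI)
  show "finite (nodes tree_pp)" unfolding nodes_tree_pp by (intro finite_imageI finite_positions)
  show "root tree_pp \<in> nodes tree_pp" unfolding nodes_tree_pp root_tree_pp positions_def by simp
next
  fix n assume "n \<in> nodes tree_pp"
  then obtain p s where ps: "n = to_nat p" "subtree T p = Some s" by (rule nodes_tree_ppE)
  then have "wf_config C (root_config s)" using subtree_invariant by blast
  then show "finite (fst (lab tree_pp n))" "finite (snd (lab tree_pp n))"
    using lab_tree_pp[OF ps(2)] ps(1) finite_subset[OF _ finite_C] unfolding wf_config_def by auto
  have "(root tree_pp, to_nat p) \<in> (child_edges tree_pp)\<^sup>*" using ps(2)
  proof (induction p arbitrary: s)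
    case Nil show ?case unfolding root_tree_pp by (rule rtrancl_refl)
  next
    case (Cons i p)
    obtain c r ts where s: "subtree T p = Some (PNode c r ts)" "i < length ts" "ts ! i = s"
      using subtree_Cons[OF Cons.prems] by blast
    have "(to_nat p, to_nat (i # p)) \<in> child_edges tree_pp"
      using s kind_tree_pp_PNode[OF s(1)] unfolding child_edges_def nodes_tree_pp positions_def by force
    then show ?case by (rule rtrancl_into_rtrancl[OF Cons.IH[OF s(1)]])
  qed
  then show "(root tree_pp, n) \<in> (child_edges tree_pp)\<^sup>*" using ps by simp
next
  fix n r cs assume n: "n \<in> nodes tree_pp" and k: "kind tree_pp n = Inner r cs"
  then obtain p c ts where p: "n = to_nat p" "subtree T p = Some (PNode c r ts)"
    "cs = map (\<lambda>i. to_nat (i # p)) [0..<length ts]" by (rule tree_pp_children)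
  show "set cs \<subseteq> nodes tree_pp" using p unfolding nodes_tree_pp positions_def by auto
  show "\<And>i. i < length cs \<Longrightarrow> cs ! i \<noteq> root tree_pp" using p unfolding root_tree_pp by auto
  have "map (lab tree_pp) cs = map (cseq \<circ> root_config) ts"
    using p lab_tree_pp by (auto intro!: nth_equalityI)
  then show "rinst r (map (lab tree_pp) cs) (lab tree_pp n)"
    using subtree_PNode(2)[OF p(2)] lab_tree_pp[OF p(2)] p(1) by simp
next
  fix n m r cs r' cs' i j
  assume "n \<in> nodes tree_pp" "m \<in> nodes tree_pp" "kind tree_pp n = Inner r cs" "kind tree_pp m = Inner r' cs'"
    and ij: "i < length cs" "j < length cs'" "cs ! i = cs' ! j"
  then have n: "n \<in> nodes tree_pp" "kind tree_pp n = Inner r cs"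
    and m: "m \<in> nodes tree_pp" "kind tree_pp m = Inner r' cs'" by auto
  obtain p c ts where p: "n = to_nat p" "subtree T p = Some (PNode c r ts)"
      "cs = map (\<lambda>i. to_nat (i # p)) [0..<length ts]"
    using n by (rule tree_pp_children)
  obtain p' c' ts' where p': "m = to_nat p'" "subtree T p' = Some (PNode c' r' ts')"
      "cs' = map (\<lambda>i. to_nat (i # p')) [0..<length ts']"
    using m by (rule tree_pp_children)
  have "i # p = j # p'" using ij p p' by simp
  then show "n = m" "i = j" using p(1) p'(1) by simp_all
next
  fix n d assume n: "n \<in> nodes tree_pp" and k: "kind tree_pp n = Bud d"
  obtain p s where ps: "n = to_nat p" "subtree T p = Some s" using n by (rule nodes_tree_ppE)
  then obtain c q b where s: "s = PBud c q b" "d = to_nat q" using k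
    by (cases s) (auto simp: kind_tree_pp_PNode kind_tree_pp_PBud)
  obtain r ts where q: "subtree T q = Some (PNode c r ts)" "ts \<noteq> []" using subtree_PBud ps s by blast
  show "d \<in> nodes tree_pp" using s q unfolding nodes_tree_pp positions_def by auto
  show "lab tree_pp d = lab tree_pp n" using lab_tree_pp[OF q(1)] lab_tree_pp[OF ps(2)] s ps by simp
  show "\<exists>r cs. kind tree_pp d = Inner r cs \<and> cs \<noteq> []" using kind_tree_pp_PNode[OF q(1)] s q(2) by simp
qed

lemma cut_free_tree_pp: "cut_free tree_pp"
  unfolding cut_free_def
proof (intro ballI allI)
  fix n f cs assume "n \<in> nodes tree_pp"
  then obtain p s where ps: "n = to_nat p" "subtree T p = Some s" by (rule nodes_tree_ppE)
  then show "kind tree_pp n \<noteq> Inner (RCut f) cs"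
    using subtree_PNode(3) by (cases s) (auto simp: kind_tree_pp_PNode kind_tree_pp_PBud)
qed

lemma root_lab_tree_pp: "lab tree_pp (root tree_pp) = cseq c0"
  using lab_tree_pp[of "[]" T] derivation_tree_root_config[OF tree_T] unfolding root_tree_pp by simp

end

section \<open>Good traces along infinite paths\<close>

lemma mono_bounded_eventually_const:
  fixes L :: "nat \<Rightarrow> nat"
  assumes mono: "\<And>j. J \<le> j \<Longrightarrow> L j \<le> L (Suc j)" and bound: "\<And>j. L j \<le> B"
  shows "\<exists>K\<ge>J. \<forall>j\<ge>K. L j = L K"
proof -
  have le: "L j \<le> L j'" if "J \<le> j" "j \<le> j'" for j j'
    using that(2,1) by (induction j' rule: dec_induct) (auto intro: le_trans mono)
  have fin: "finite (L ` {J..})" using bound by (auto intro: finite_subset[of _ "{..B}"])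
  obtain K where K: "K \<ge> J" "L K = Max (L ` {J..})"
    using Max_in[OF fin] by auto
  have "L j = L K" if "j \<ge> K" for j
    using le[OF K(1) that] Max_ge[OF fin, of "L j"] K that by auto
  then show ?thesis using K(1) by blast
qed

lemma no_infinite_descent:
  fixes w :: "nat \<Rightarrow> nat"
  assumes "\<And>j. J \<le> j \<Longrightarrow> w (Suc j) \<le> w j" and "\<forall>m. \<exists>j\<ge>m. w (Suc j) < w j"
  shows False
proof -
  have le: "w j \<le> w J" if "J \<le> j" for j
    using that by (induction j rule: dec_induct) (auto intro: le_trans assms(1))
  obtain K where K: "K \<ge> J" "\<forall>j\<ge>K. w J - w j = w J - w K"
    using mono_bounded_eventually_const[of J "\<lambda>j. w J - w j" "w J"] assms(1)
    by (meson diff_le_mono2 diff_le_self)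
  obtain j where j: "j \<ge> K" "w (Suc j) < w j" using assms(2) by blast
  have "w J - w (Suc j) = w J - w j" using K(2) j(1) by (metis le_SucI)
  moreover have "w j \<le> w J" "w (Suc j) \<le> w J" using le K(1) j(1) by auto
  ultimately show False using j(2) by linarith
qed

lemma infinitely_many_progress:
  assumes steps: "\<And>j. k \<le> j \<Longrightarrow> tstep (r j) (i j) (t j) (t (Suc j))" and branch: "\<And>j. i j < 2"
    and moves: "\<forall>m. \<exists>j\<ge>m. t (Suc j) \<noteq> t j"
  shows "\<forall>m. \<exists>j\<ge>max k m. progress (r j) (i j) (t j) (t (Suc j))"
proof (rule ccontr)
  assume "\<not> ?thesis"
  then obtain m where np: "\<And>j. max k m \<le> j \<Longrightarrow> \<not> progress (r j) (i j) (t j) (t (Suc j))" by auto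
  have less: "trace_weight (t (Suc j)) < trace_weight (t j)" if "max k m \<le> j" "t (Suc j) \<noteq> t j" for j
  proof -
    have kj: "k \<le> j" using that(1) by simp
    show ?thesis using tstep_trace_weight_less[OF steps[OF kj] that(2) np[OF that(1)] branch] .
  qed
  show False
  proof (rule no_infinite_descent[of "max k m" "\<lambda>j. trace_weight (t j)"])
    show "trace_weight (t (Suc j)) \<le> trace_weight (t j)" if "max k m \<le> j" for j
      using less[OF that] by (cases "t (Suc j) = t j") auto
    show "\<forall>n. \<exists>j\<ge>n. trace_weight (t (Suc j)) < trace_weight (t j)"
      using moves less by (metis max.bounded_iff nat_le_linear)
  qed
qed

lemma follows_trace:
  assumes follows: "\<And>j. J \<le> j \<Longrightarrow> follows (F j) (r j) (i j) (F (Suc j))" and branch: "\<And>j. i j < 2"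
    and moves: "\<forall>m. \<exists>j\<ge>m. F (Suc j) \<noteq> F j"
  obtains k t where "\<And>j. k \<le> j \<Longrightarrow> F j = Some (t j) \<and> tstep (r j) (i j) (t j) (t (Suc j))"
    "\<forall>m. \<exists>j\<ge>max k m. progress (r j) (i j) (t j) (t (Suc j))"
proof -
  obtain k where k: "k \<ge> J" "F (Suc k) \<noteq> F k" using moves by blast
  have some: "F j \<noteq> None" if "k \<le> j" for j
    using that
  proof (induction j rule: dec_induct)
    case base then show ?case using follows[OF k(1)] k(2) by (auto simp: follows_def)
  next
    case (step j) then show ?case using follows[of j] k(1) by (auto simp: follows_def)
  qed
  define t where "t j = the (F j)" for j
  have Ft: "F j = Some (t j)" if "k \<le> j" for j using some[OF that] by (auto simp: t_def)
  have steps: "tstep (r j) (i j) (t j) (t (Suc j))" if "k \<le> j" for j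
    using follows[of j] Ft[of j] Ft[of "Suc j"] that k(1) by (auto simp: follows_def)
  have "\<forall>m. \<exists>j\<ge>m. t (Suc j) \<noteq> t j"
    using moves Ft by (metis le_Suc_eq max.bounded_iff nat_le_linear)
  then show thesis using that Ft steps infinitely_many_progress[of k r i t, OF steps branch] by blast
qed

fun path_base :: "(nat list \<Rightarrow> nat \<Rightarrow> bool) \<Rightarrow> nat list \<Rightarrow> nat list" where
  "path_base e [] = []"
| "path_base e (i # p) = (if e p i then path_base e p else i # p)"

lemma length_path_base: "length (path_base e p) \<le> length p"
  by (induction p) auto

lemma path_base_path_along: "path_along e q p \<Longrightarrow> path_base e p = path_base e q"
  by (induction rule: path_along.induct) auto

text \<open>A path in a tree of bounded depth with back edges: if every back edge jumps to an
  e-ancestor, the length of the maximal e-path ending at the current position never drops, and it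
  grows at every step that is not an e-edge.\<close>

lemma eventually_edges:
  assumes step: "\<And>j. J \<le> j \<Longrightarrow> \<pi> (Suc j) = g j # \<pi> j \<or>
      (\<pi> (Suc j) \<noteq> g j # \<pi> j \<and> path_along e (\<pi> (Suc j)) (g j # \<pi> j))"
    and bound: "\<And>j. length (\<pi> j) \<le> B"
  shows "\<exists>K. \<forall>j\<ge>K. e (\<pi> j) (g j)"
proof -
  define L where "L j = length (path_base e (\<pi> j))" for j
  have L: "L j \<le> L (Suc j) \<and> (\<not> e (\<pi> j) (g j) \<longrightarrow> L j < L (Suc j))" if "J \<le> j" for j
    using step[OF that]
  proof
    assume "\<pi> (Suc j) = g j # \<pi> j"
    then show ?thesis using length_path_base[of e "\<pi> j"] unfolding L_def by auto
  next
    assume "\<pi> (Suc j) \<noteq> g j # \<pi> j \<and> path_along e (\<pi> (Suc j)) (g j # \<pi> j)"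
    then show ?thesis
      using path_along_ConsD[of e "\<pi> (Suc j)" "g j" "\<pi> j"] path_base_path_along unfolding L_def by fastforce
  qed
  obtain K where "K \<ge> J" "\<forall>j\<ge>K. L j = L K"
    using mono_bounded_eventually_const[of J L B] L bound length_path_base unfolding L_def by (meson le_trans)
  then have "e (\<pi> j) (g j)" if "j \<ge> K" for j
    using L[of j] that by (metis le_SucI less_irrefl order_trans)
  then show ?thesis by blast
qed

lemma infinitely_many_jumps:
  assumes "\<And>j. length (\<pi> j) \<le> B"
  shows "\<exists>j\<ge>m. \<pi> (Suc j) \<noteq> g j # \<pi> j"
proof (rule ccontr)
  assume "\<not> ?thesis"
  then have "length (\<pi> (m + n)) = length (\<pi> m) + n" for n by (induction n) auto
  from this[of "Suc B"] assms[of "m + Suc B"] show False by simp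
qed

context tree_preproof
begin

definition max_depth :: nat where "max_depth = Max (length ` positions T)"

lemma length_le_max_depth: "subtree T p \<noteq> None \<Longrightarrow> length p \<le> max_depth"
  unfolding max_depth_def using finite_positions[of T] by (auto simp: positions_def intro!: Max_ge)

end

locale tree_path = tree_preproof +
  fixes f g :: "nat \<Rightarrow> nat"
  assumes path: "inf_path tree_pp f g"
begin

definition pos :: "nat \<Rightarrow> nat list" where "pos j = from_nat (f j)"
definition node where "node j = the (subtree T (pos j))"
definition cfg where "cfg j = root_config (node j)"
definition kids where "kids j = children (node j)"
definition rl where "rl j = root_rule (node j)"

lemma path_node:
  "subtree T (pos j) = Some (PNode (cfg j) (rl j) (kids j)) \<and> g j < length (kids j) \<and>
   rule_of tree_pp (f j) = rl j \<and> f j = to_nat (pos j) \<and>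
   pos (Suc j) = (case kids j ! g j of PNode c r ts \<Rightarrow> g j # pos j | PBud c q b \<Rightarrow> q)"
proof -
  obtain r cs where fj: "f j \<in> nodes tree_pp" "kind tree_pp (f j) = Inner r cs" "g j < length cs"
    "f (Suc j) = resolve tree_pp (cs ! g j)"
    using path unfolding inf_path_def by blast
  obtain p c ts where "f j = to_nat p" "subtree T p = Some (PNode c r ts)"
    "cs = map (\<lambda>i. to_nat (i # p)) [0..<length ts]"
    using fj(1,2) by (rule tree_pp_children)
  then have p: "f j = to_nat (pos j)" "subtree T (pos j) = Some (PNode c r ts)"
    "cs = map (\<lambda>i. to_nat (i # pos j)) [0..<length ts]"
    by (simp_all add: pos_def)
  have n: "cfg j = c" "rl j = r" "kids j = ts" using p(2) by (simp_all add: cfg_def rl_def kids_def node_def)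
  have gj: "g j < length ts" using fj(3) p(3) by simp
  have "resolve tree_pp (cs ! g j) = to_nat (case ts ! g j of PNode c r ts \<Rightarrow> g j # pos j | PBud c q b \<Rightarrow> q)"
    using p(2,3) gj kind_tree_pp_PNode[of "g j # pos j"] kind_tree_pp_PBud[of "g j # pos j"]
    by (cases "ts ! g j") (auto simp: resolve_def)
  then have "pos (Suc j) = (case ts ! g j of PNode c r ts \<Rightarrow> g j # pos j | PBud c q b \<Rightarrow> q)"
    using fj(4) by (simp add: pos_def)
  then show ?thesis using n p gj fj(2) by (simp add: rule_of_def)
qed

lemma cfg_Suc: "cfg (Suc j) = root_config (kids j ! g j)"
proof (cases "kids j ! g j")
  case (PNode c r ts)
  then have "subtree T (pos (Suc j)) = Some (kids j ! g j)" using path_node[of j] by simp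
  then show ?thesis by (simp add: cfg_def node_def)
next
  case (PBud c q b)
  then have sub: "subtree T (g j # pos j) = Some (PBud c q b)" and q: "pos (Suc j) = q"
    using path_node[of j] by auto
  obtain r ts where "subtree T q = Some (PNode c r ts)" using subtree_PBud[OF sub] by blast
  then show ?thesis using q PBud by (simp add: cfg_def node_def)
qed

lemma lab_path: "lab tree_pp (f j) = cseq (cfg j)"
  using path_node[of j] lab_tree_pp by (metis cfg_def node_def option.sel)

lemma wf_config_path: "wf_config C (cfg j)"
  using path_node[of j] subtree_PNode(1) by blast

lemma branch_less_2: "g j < 2"
  using path_node[of j] subtree_PNode(4) by fastforce

lemma pos_depth: "length (pos j) \<le> max_depth"
  using path_node[of j] length_le_max_depth by simp

lemma focus_edge_path: "focus_edge T (pos j) (g j) \<longleftrightarrow> focus_follows (cfg j) (rl j) (g j) (cfg (Suc j))"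
  using path_node[of j] cfg_Suc[of j] unfolding focus_edge_def by auto

lemma loop_edge_path:
  "loop_edge T (pos j) (g j) \<longleftrightarrow>
   focus_follows (cfg j) (rl j) (g j) (cfg (Suc j)) \<and> loop_follows (cfg j) (rl j) (g j) (cfg (Suc j))"
  using path_node[of j] cfg_Suc[of j] unfolding loop_edge_def by auto

lemma bud_path:
  assumes "kids j ! g j = PBud c q b"
  shows "pos (Suc j) = q \<and> q \<noteq> g j # pos j \<and> cfg (Suc j) = c \<and>
    (b \<longrightarrow> path_along (focus_edge T) q (g j # pos j) \<and> records_focus c) \<and>
    (\<not> b \<longrightarrow> path_along (loop_edge T) q (g j # pos j) \<and> records_loop c)"
  using assms path_node[of j] subtree_PBud[of "g j # pos j" c q b] cfg_Suc[of j] by auto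

lemma path_step:
  "pos (Suc j) = g j # pos j \<or>
   (\<exists>c q b. kids j ! g j = PBud c q b \<and> pos (Suc j) = q \<and> q \<noteq> g j # pos j)"
proof (cases "kids j ! g j")
  case PNode then show ?thesis using path_node[of j] by simp
next
  case (PBud c q b) then show ?thesis using bud_path[OF PBud] by blast
qed

lemma path_step_focus_edge:
  "pos (Suc j) = g j # pos j \<or>
   (pos (Suc j) \<noteq> g j # pos j \<and> path_along (focus_edge T) (pos (Suc j)) (g j # pos j))"
proof (cases "kids j ! g j")
  case PNode then show ?thesis using path_node[of j] by simp
next
  case (PBud c q b)
  then show ?thesis
    using bud_path[OF PBud] path_along_mono[of "loop_edge T" q "g j # pos j" "focus_edge T"]
      loop_edge_focus_edge
    by (cases b) auto
qed

lemma path_step_loop_edge: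
  assumes "\<And>c q. kids j ! g j \<noteq> PBud c q True"
  shows "pos (Suc j) = g j # pos j \<or>
    (pos (Suc j) \<noteq> g j # pos j \<and> path_along (loop_edge T) (pos (Suc j)) (g j # pos j))"
proof (cases "kids j ! g j")
  case PNode then show ?thesis using path_node[of j] by simp
next
  case (PBud c q b)
  then have "\<not> b" using assms by (cases b) auto
  then show ?thesis using bud_path[OF PBud] by auto
qed

lemma eventually_focus_follows: "\<exists>K. \<forall>j\<ge>K. focus_follows (cfg j) (rl j) (g j) (cfg (Suc j))"
  using eventually_edges[of 0 pos g "focus_edge T" max_depth] path_step_focus_edge pos_depth focus_edge_path
  by auto

lemma bud_moves_focus:
  assumes b: "kids j ! g j = PBud c q True"
    and ff: "focus_follows (cfg (Suc j)) (rl (Suc j)) (g (Suc j)) (cfg (Suc (Suc j)))"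
  shows "focus (cfg (Suc (Suc j))) \<noteq> focus (cfg (Suc j))"
proof -
  have r: "records_focus (cfg (Suc j))" using bud_path[OF b] by blast
  have s: "subtree T (pos (Suc j)) = Some (PNode (cfg (Suc j)) (rl (Suc j)) (kids (Suc j)))"
    "g (Suc j) < length (kids (Suc j))" using path_node[of "Suc j"] by blast+
  show ?thesis
    using records_focus_child[OF s(1) r s(2)] ff unfolding cfg_Suc[of "Suc j"] .
qed

lemma bud_moves_loop_focus:
  assumes b: "kids j ! g j = PBud c q False"
    and lf: "loop_follows (cfg (Suc j)) (rl (Suc j)) (g (Suc j)) (cfg (Suc (Suc j)))"
  shows "loop_focus (cfg (Suc (Suc j))) \<noteq> loop_focus (cfg (Suc j))"
proof -
  have r: "records_loop (cfg (Suc j))" using bud_path[OF b] by blast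
  have s: "subtree T (pos (Suc j)) = Some (PNode (cfg (Suc j)) (rl (Suc j)) (kids (Suc j)))"
    "g (Suc j) < length (kids (Suc j))" using path_node[of "Suc j"] by blast+
  show ?thesis
    using records_loop_child[OF s(1) r s(2)] lf unfolding cfg_Suc[of "Suc j"] .
qed

lemma good_trace_from_focus:
  assumes fol: "\<And>j. K \<le> j \<Longrightarrow> follows (F j) (rl j) (g j) (F (Suc j))"
    and moves: "\<forall>m. \<exists>j\<ge>m. F (Suc j) \<noteq> F j"
    and sub: "\<And>j. set_option (F j) \<subseteq> snd (cseq (cfg j))"
  shows "\<exists>k t. good_trace tree_pp f g k t"
proof -
  obtain k t where kt: "\<And>j. k \<le> j \<Longrightarrow> F j = Some (t j) \<and> tstep (rl j) (g j) (t j) (t (Suc j))"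
      and pr: "\<forall>m. \<exists>j\<ge>max k m. progress (rl j) (g j) (t j) (t (Suc j))"
    using follows_trace[OF fol branch_less_2 moves] by blast
  have rule: "rule_of tree_pp (f j) = rl j" for j using path_node[of j] by blast
  have "good_trace tree_pp f g k t"
    unfolding good_trace_def rule
  proof (intro conjI allI impI)
    fix j assume j: "k \<le> j"
    show "t j \<in> snd (lab tree_pp (f j))" using kt[OF j] sub[of j] unfolding lab_path by auto
    show "tstep (rl j) (g j) (t j) (t (Suc j))" using kt[OF j] by blast
  qed (use pr in blast)
  then show ?thesis by blast
qed

lemma trace_if_focus_moves:
  assumes "\<forall>m. \<exists>j\<ge>m. focus (cfg (Suc j)) \<noteq> focus (cfg j)"
  shows "\<exists>k t. good_trace tree_pp f g k t"
proof -
  obtain K where K: "\<forall>j\<ge>K. focus_follows (cfg j) (rl j) (g j) (cfg (Suc j))"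
    using eventually_focus_follows by blast
  show ?thesis
  proof (rule good_trace_from_focus[of K "\<lambda>j. focus (cfg j)"])
    show "set_option (focus (cfg j)) \<subseteq> snd (cseq (cfg j))" for j
      using wf_config_path[of j] by (simp add: wf_config_def)
  qed (use K assms in simp_all)
qed

lemma eventually_no_focus_bud:
  assumes "\<And>j. K0 \<le> j \<Longrightarrow> focus (cfg (Suc j)) = focus (cfg j)"
  obtains K where "\<And>j c q. K \<le> j \<Longrightarrow> kids j ! g j \<noteq> PBud c q True"
proof -
  obtain K1 where K1: "\<forall>j\<ge>K1. focus_follows (cfg j) (rl j) (g j) (cfg (Suc j))"
    using eventually_focus_follows by blast
  have "kids j ! g j \<noteq> PBud c q True" if "max K0 K1 \<le> j" for j c q
  proof
    assume b: "kids j ! g j = PBud c q True"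
    have "focus_follows (cfg (Suc j)) (rl (Suc j)) (g (Suc j)) (cfg (Suc (Suc j)))"
      using K1 that by simp
    then have "focus (cfg (Suc (Suc j))) \<noteq> focus (cfg (Suc j))" by (rule bud_moves_focus[OF b])
    then show False using assms[of "Suc j"] that by simp
  qed
  then show thesis using that by blast
qed

lemma trace_if_no_focus_bud:
  assumes no_bud: "\<And>j c q. K \<le> j \<Longrightarrow> kids j ! g j \<noteq> PBud c q True"
  shows "\<exists>k t. good_trace tree_pp f g k t"
proof -
  have step: "pos (Suc j) = g j # pos j \<or>
      (pos (Suc j) \<noteq> g j # pos j \<and> path_along (loop_edge T) (pos (Suc j)) (g j # pos j))"
    if "K \<le> j" for j
    by (rule path_step_loop_edge) (rule no_bud[OF that])
  have "\<exists>K2. \<forall>j\<ge>K2. loop_edge T (pos j) (g j)"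
    by (rule eventually_edges[of K pos g "loop_edge T" max_depth, OF step pos_depth])
  then obtain K2 where K2: "\<forall>j\<ge>K2. loop_edge T (pos j) (g j)" ..
  have follows: "loop_follows (cfg j) (rl j) (g j) (cfg (Suc j))" if "K2 \<le> j" for j
    using K2 that unfolding loop_edge_path by blast
  have "\<exists>j\<ge>m. loop_focus (cfg (Suc j)) \<noteq> loop_focus (cfg j)" for m
  proof -
    have "\<exists>j\<ge>max m (max K K2). pos (Suc j) \<noteq> g j # pos j" by (rule infinitely_many_jumps[OF pos_depth])
    then obtain j where j: "max m (max K K2) \<le> j" "pos (Suc j) \<noteq> g j # pos j" by blast
    obtain c q b where b: "kids j ! g j = PBud c q b" using path_step[of j] j(2) by blast
    have "b = False" using no_bud[of j c q] j(1) b by (cases b) simp_all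
    then have "loop_focus (cfg (Suc (Suc j))) \<noteq> loop_focus (cfg (Suc j))"
      using bud_moves_loop_focus[of j c q] b follows[of "Suc j"] j(1) by simp
    then show ?thesis using j(1) by (intro exI[of _ "Suc j"]) simp
  qed
  moreover have "set_option (loop_focus (cfg j)) \<subseteq> snd (cseq (cfg j))" for j
    using wf_config_path[of j] by (simp add: wf_config_def)
  ultimately show ?thesis by (intro good_trace_from_focus[of K2 "\<lambda>j. loop_focus (cfg j)"] follows) simp_all
qed

lemma good_trace_exists: "\<exists>k t. good_trace tree_pp f g k t"
proof (cases "\<forall>m. \<exists>j\<ge>m. focus (cfg (Suc j)) \<noteq> focus (cfg j)")
  case True then show ?thesis by (rule trace_if_focus_moves)
next
  case False
  then obtain K0 where K0: "\<And>j. K0 \<le> j \<Longrightarrow> focus (cfg (Suc j)) = focus (cfg j)" by auto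
  obtain K where "\<And>j c q. K \<le> j \<Longrightarrow> kids j ! g j \<noteq> PBud c q True"
    using eventually_no_focus_bud[OF K0] by blast
  then show ?thesis by (rule trace_if_no_focus_bud)
qed

end

lemma (in tree_preproof) is_proof_tree_pp: "is_proof tree_pp"
  unfolding is_proof_def
proof (intro conjI allI impI is_preproof_tree_pp)
  fix f g assume "inf_path tree_pp f g"
  then interpret tree_path C c0 T f g by unfold_locales
  show "\<exists>k t. good_trace tree_pp f g k t" by (rule good_trace_exists)
qed

lemma derivable_if_valid:
  assumes "finite C" "components_closed C" "G \<subseteq> C" "D \<subseteq> C" "valid G D"
  shows "derivable [] [] ((G, D), None, None)"
  using world_construction.countermodel[OF world_construction.intro[OF assms(1,2)] _ assms(3,4)] assms(5)
  by blast

lemma cutfree_provable_if_derivable: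
  assumes fin: "finite C" and cl: "components_closed C" and GD: "G \<subseteq> C" "D \<subseteq> C"
    and der: "derivable [] [] ((G, D), None, None)"
  shows "cutfree_provable G D"
proof -
  obtain T where T: "derivation_tree [] [] [] ((G, D), None, None) T"
    using derivable_derivation_tree[OF der] by fastforce
  interpret tree_preproof C "((G, D), None, None)" T
    by unfold_locales (use fin cl GD T in \<open>auto simp: wf_config_def\<close>)
  show ?thesis
    unfolding cutfree_provable_def using is_proof_tree_pp cut_free_tree_pp root_lab_tree_pp by auto
qed

theorem mainTheorem11:
  fixes G D :: "('p, 'a) fm set"
  assumes "finite G" and "finite D"
    and "valid G D"
  shows "cutfree_provable G D"
proof -
  define C where "C = \<Union> (fl_closure ` (G \<union> D))"
  have "finite C" unfolding C_def using assms(1,2) finite_fl_closure by blast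
  moreover have "components_closed C"
    unfolding components_closed_def C_def using components_fl_closure by blast
  moreover have "G \<subseteq> C" "D \<subseteq> C" unfolding C_def using fl_closure_self by blast+
  ultimately show ?thesis using derivable_if_valid cutfree_provable_if_derivable assms(3) by blast
qed

end
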